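(* Let $\phi\cong\bigoplus_{i\in\mathcal I}\phi_i^{\oplus m_i}$ be a semisimple finite-dimensional complex representation of a compact Lie algebra $\mathfrak{g}$, with pairwise inequivalent irreducible $\phi_i$ and multiplicities $m_i$, and let $\mathfrak{h}$ be a Lie subalgebra of $\mathfrak{g}$. Write $\phi|_{\mathfrak{h}}\cong\bigoplus_{j\in\mathcal J}\psi_j^{\oplus n_j}$ and $\phi_i|_{\mathfrak{h}}\cong\bigoplus_{j\in\mathcal J}\psi_j^{\oplus n_{ji}}$ with pairwise inequivalent irreducible representations $\psi_j$ of $\mathfrak{h}$, so that $n_j=\sum_i n_{ji}m_i$. Then: (a) $\|\phi_i|_{\mathfrak{h}}\|_1=1$ for all $i$ with $m_i\ne0$ if and only if $\|\phi|_{\mathfrak{h}}\|_1=\|\phi\|_1$; (b) $\|\phi|_{\mathfrak{h}}\|_2=\|\phi\|_2$ implies $\|\phi|_{\mathfrak{h}}\|_1=\|\phi\|_1$; (c) $\|\phi|_{\mathfrak{h}}\|_2=\|\phi\|_2$ holds if and only if $\|\phi|_{\mathfrak{h}}\|_1=\|\phi\|_1$ and $\phi_i|_{\mathfrak{h}}\not\cong\phi_k|_{\mathfrak{h}}$ for all $i\ne k$ with $m_i\ne0$ and $m_k\ne0$.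
   Context: For a semisimple representation $\psi\cong\bigoplus_i\psi_i^{\oplus m_i}$ (pairwise inequivalent irreducible $\psi_i$), $\|\psi\|_1=\sum_i m_i$ and $\|\psi\|_2=\sum_i m_i^2$. Restrictions of semisimple representations of compact Lie algebras to subalgebras are semisimple. *)

theory Defs
  imports Complex_Main "HOL-Analysis.Analysis" "Jordan_Normal_Form.Matrix"
begin

definition lie_algebra :: "('g::euclidean_space \<Rightarrow> 'g \<Rightarrow> 'g) \<Rightarrow> bool" where
  "lie_algebra br \<longleftrightarrow>
     (\<forall>x y z. br (x + y) z = br x z + br y z) \<and>
     (\<forall>(a::real) x y. br (a *\<^sub>R x) y = a *\<^sub>R br x y) \<and>
     (\<forall>x. br x x = 0) \<and>
     (\<forall>x y z. br x (br y z) + br y (br z x) + br z (br x y) = 0)"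

text \<open>Compact Lie algebra: admits an ad-invariant inner product.\<close>
definition compact_lie_algebra :: "('g::euclidean_space \<Rightarrow> 'g \<Rightarrow> 'g) \<Rightarrow> bool" where
  "compact_lie_algebra br \<longleftrightarrow> lie_algebra br \<and>
     (\<exists>B :: 'g \<Rightarrow> 'g \<Rightarrow> real.
        (\<forall>x y z. B (x + y) z = B x z + B y z) \<and>
        (\<forall>a x y. B (a *\<^sub>R x) y = a * B x y) \<and>
        (\<forall>x y. B x y = B y x) \<and>
        (\<forall>x. x \<noteq> 0 \<longrightarrow> B x x > 0) \<and>
        (\<forall>x y z. B (br x y) z + B y (br x z) = 0))"

definition lie_subalgebra :: "('g::euclidean_space \<Rightarrow> 'g \<Rightarrow> 'g) \<Rightarrow> 'g set \<Rightarrow> bool" where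
  "lie_subalgebra br H \<longleftrightarrow> 0 \<in> H \<and>
     (\<forall>x\<in>H. \<forall>y\<in>H. x + y \<in> H) \<and>
     (\<forall>(a::real). \<forall>x\<in>H. a *\<^sub>R x \<in> H) \<and>
     (\<forall>x\<in>H. \<forall>y\<in>H. br x y \<in> H)"

text \<open>Representations of a subalgebra
  are only looked at on S; restriction to H is the same pair viewed on H.\<close>
type_synonym 'g rep = "nat \<times> ('g \<Rightarrow> complex mat)"

definition is_rep :: "('g::euclidean_space \<Rightarrow> 'g \<Rightarrow> 'g) \<Rightarrow> 'g set \<Rightarrow> 'g rep \<Rightarrow> bool" where
  "is_rep br S r \<longleftrightarrow> (case r of (d, \<rho>) \<Rightarrow>
     (\<forall>x\<in>S. \<rho> x \<in> carrier_mat d d) \<and>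
     (\<forall>x\<in>S. \<forall>y\<in>S. \<rho> (x + y) = \<rho> x + \<rho> y) \<and>
     (\<forall>(a::real). \<forall>x\<in>S. \<rho> (a *\<^sub>R x) = complex_of_real a \<cdot>\<^sub>m \<rho> x) \<and>
     (\<forall>x\<in>S. \<forall>y\<in>S. \<rho> (br x y) = \<rho> x * \<rho> y - \<rho> y * \<rho> x))"

definition is_subspace :: "nat \<Rightarrow> complex vec set \<Rightarrow> bool" where
  "is_subspace d W \<longleftrightarrow> W \<subseteq> carrier_vec d \<and> 0\<^sub>v d \<in> W \<and>
     (\<forall>v\<in>W. \<forall>w\<in>W. v + w \<in> W) \<and> (\<forall>c. \<forall>v\<in>W. c \<cdot>\<^sub>v v \<in> W)"

definition irreducible_rep :: "('g::euclidean_space \<Rightarrow> 'g \<Rightarrow> 'g) \<Rightarrow> 'g set \<Rightarrow> 'g rep \<Rightarrow> bool" where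
  "irreducible_rep br S r \<longleftrightarrow> is_rep br S r \<and> (case r of (d, \<rho>) \<Rightarrow>
     d > 0 \<and>
     (\<forall>W. is_subspace d W \<and> (\<forall>x\<in>S. \<forall>v\<in>W. \<rho> x *\<^sub>v v \<in> W) \<longrightarrow>
          W = {0\<^sub>v d} \<or> W = carrier_vec d))"

definition rep_equiv :: "('g::euclidean_space \<Rightarrow> 'g \<Rightarrow> 'g) \<Rightarrow> 'g set \<Rightarrow> 'g rep \<Rightarrow> 'g rep \<Rightarrow> bool" where
  "rep_equiv br S r s \<longleftrightarrow> is_rep br S r \<and> is_rep br S s \<and>
     (case r of (d, \<rho>) \<Rightarrow> case s of (e, \<sigma>) \<Rightarrow>
       d = e \<and> (\<exists>T \<in> carrier_mat d d. invertible_mat T \<and> (\<forall>x\<in>S. T * \<rho> x = \<sigma> x * T)))"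

definition dsum2 :: "'g rep \<Rightarrow> 'g rep \<Rightarrow> 'g rep" where
  "dsum2 r s = (case r of (d1, \<rho>1) \<Rightarrow> case s of (d2, \<rho>2) \<Rightarrow>
     (d1 + d2, \<lambda>x. four_block_mat (\<rho>1 x) (0\<^sub>m d1 d2) (0\<^sub>m d2 d1) (\<rho>2 x)))"

definition dsum_list :: "'g rep list \<Rightarrow> 'g rep" where
  "dsum_list rs = foldr dsum2 rs (0, \<lambda>x. 0\<^sub>m 0 0)"

definition multi_sum :: "(nat \<Rightarrow> 'g rep) \<Rightarrow> (nat \<Rightarrow> nat) \<Rightarrow> nat \<Rightarrow> 'g rep" where
  "multi_sum \<phi>s m p = dsum_list (concat (map (\<lambda>i. replicate (m i) (\<phi>s i)) [0..<p]))"

end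

theory Submission
  imports Defs "Jordan_Normal_Form.Determinant"
begin

text \<open>
  Direct sums are compatible with equivalence, so restricting \<open>\<phi> \<cong> \<Oplus>\<^sub>i m\<^sub>i \<phi>\<^sub>i\<close>
  to \<open>H\<close> yields the \<open>\<psi>\<^sub>j\<close> with multiplicities \<open>\<Sum>\<^sub>i n\<^sub>j\<^sub>i m\<^sub>i\<close>.
  Multiplicities of pairwise inequivalent irreducibles are unique, because an irreducible summand
  \<open>\<rho>\<close> of \<open>\<rho> \<oplus> \<xi> \<cong> \<rho> \<oplus> \<eta>\<close> cancels: by Schur's lemma the \<open>\<rho>\<rho>\<close>-block of the
  equivalence is invertible or zero, and after a unipotent correction in the second case its
  Schur complement is an equivalence \<open>\<xi> \<cong> \<eta>\<close>. Hence \<open>n\<^sub>j = \<Sum>\<^sub>i n\<^sub>j\<^sub>i m\<^sub>i\<close>, and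
  \<open>\<phi>\<^sub>i|\<^sub>H \<cong> \<phi>\<^sub>k|\<^sub>H\<close> iff the columns \<open>i\<close> and \<open>k\<close> of \<open>(n\<^sub>j\<^sub>i)\<close> agree.

  Every column sum \<open>c\<^sub>i\<close> is positive since \<open>\<phi>\<^sub>i \<noteq> 0\<close>, so
  \<open>\<Sum>\<^sub>j n\<^sub>j = \<Sum>\<^sub>i c\<^sub>i m\<^sub>i \<ge> \<Sum>\<^sub>i m\<^sub>i\<close> with equality iff \<open>c\<^sub>i = 1\<close> whenever \<open>m\<^sub>i \<noteq> 0\<close>;
  and \<open>\<Sum>\<^sub>j n\<^sub>j\<^sup>2 = \<Sum>\<^sub>i\<^sub>,\<^sub>k m\<^sub>i m\<^sub>k G\<^sub>i\<^sub>k\<close> with the Gram matrix \<open>G\<^sub>i\<^sub>k = \<Sum>\<^sub>j n\<^sub>j\<^sub>i n\<^sub>j\<^sub>k\<close>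
  dominates \<open>\<Sum>\<^sub>i m\<^sub>i\<^sup>2\<close> termwise, with equality iff the columns with \<open>m\<^sub>i \<noteq> 0\<close>
  are pairwise distinct unit vectors.
\<close>

section \<open>Block matrices\<close>

lemma invertible_mat_iff_inverse:
  assumes T: "T \<in> carrier_mat n n"
  shows "invertible_mat T \<longleftrightarrow> (\<exists>B\<in>carrier_mat n n. T * B = 1\<^sub>m n \<and> B * T = 1\<^sub>m n)"
proof
  assume "invertible_mat T"
  then obtain B where 1: "T * B = 1\<^sub>m n" and 2: "B * T = 1\<^sub>m (dim_row B)"
    unfolding invertible_mat_def inverts_mat_def using T by auto
  have "dim_row B = n" using arg_cong[OF 2, of dim_col] T by auto
  moreover have "dim_col B = n" using arg_cong[OF 1, of dim_col] T by auto
  ultimately show "\<exists>B\<in>carrier_mat n n. T * B = 1\<^sub>m n \<and> B * T = 1\<^sub>m n" using 1 2 by auto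
next
  assume "\<exists>B\<in>carrier_mat n n. T * B = 1\<^sub>m n \<and> B * T = 1\<^sub>m n"
  then show "invertible_mat T" using T unfolding invertible_mat_def inverts_mat_def
    by (metis carrier_matD(1) carrier_matD(2) square_mat.simps)
qed

lemma mat_eq_zero_if_mult_vec_zero:
  fixes A :: "complex mat"
  assumes A: "A \<in> carrier_mat e d" and k: "\<forall>v\<in>carrier_vec d. A *\<^sub>v v = 0\<^sub>v e"
  shows "A = 0\<^sub>m e d"
proof (rule eq_matI)
  fix i j assume i: "i < dim_row (0\<^sub>m e d :: complex mat)" and j: "j < dim_col (0\<^sub>m e d :: complex mat)"
  have "(A *\<^sub>v unit_vec d j) $ i = 0" using k i by auto
  moreover have "(A *\<^sub>v unit_vec d j) $ i = A $$ (i,j)" using A i j by auto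
  ultimately show "A $$ (i,j) = 0\<^sub>m e d $$ (i,j)" using i j by auto
qed (insert A, auto)

lemma inj_square_mat_invertible:
  fixes A :: "complex mat"
  assumes A: "A \<in> carrier_mat d d" and inj: "\<forall>v\<in>carrier_vec d. A *\<^sub>v v = 0\<^sub>v d \<longrightarrow> v = 0\<^sub>v d"
  shows "\<exists>B\<in>carrier_mat d d. A * B = 1\<^sub>m d \<and> B * A = 1\<^sub>m d"
proof -
  have "det A \<noteq> 0" using det_0_iff_vec_prod_zero_field[OF A] inj by auto
  from det_non_zero_imp_unit[OF A this, of "()"]
  show ?thesis unfolding Units_def ring_mat_def by auto
qed

lemma inj_mat_dim_le:
  fixes A :: "complex mat"
  assumes A: "A \<in> carrier_mat e d" and inj: "\<forall>v\<in>carrier_vec d. A *\<^sub>v v = 0\<^sub>v e \<longrightarrow> v = 0\<^sub>v d"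
  shows "d \<le> e"
proof (rule ccontr)
  assume "\<not> d \<le> e"
  hence ed: "e < d" by auto
  \<comment> \<open>Padding \<open>A\<close> with zero rows gives an injective, hence invertible, square matrix with a zero row.\<close>
  define A' where "A' = mat d d (\<lambda>(i,j). if i < e then A $$ (i,j) else (0::complex))"
  have A': "A' \<in> carrier_mat d d" unfolding A'_def by auto
  have ent: "(A' *\<^sub>v v) $ i = (if i < e then (A *\<^sub>v v) $ i else 0)" if "i < d" "v \<in> carrier_vec d" for i v
  proof -
    have r: "row A' i = (if i < e then row A i else 0\<^sub>v d)" using that A unfolding A'_def by (auto intro!: eq_vecI)
    show ?thesis using that A A' r by auto
  qed
  have "\<forall>v\<in>carrier_vec d. A' *\<^sub>v v = 0\<^sub>v d \<longrightarrow> v = 0\<^sub>v d"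
  proof (intro ballI impI)
    fix v :: "complex vec" assume v: "v \<in> carrier_vec d" and z: "A' *\<^sub>v v = 0\<^sub>v d"
    have "A *\<^sub>v v = 0\<^sub>v e"
    proof (rule eq_vecI)
      fix i assume i: "i < dim_vec (0\<^sub>v e :: complex vec)"
      have "(A' *\<^sub>v v) $ i = 0" using z i ed by auto
      then show "(A *\<^sub>v v) $ i = 0\<^sub>v e $ i" using ent[of i v] i ed v by auto
    qed (insert A, auto)
    then show "v = 0\<^sub>v d" using inj v by auto
  qed
  from inj_square_mat_invertible[OF A' this] obtain B where B: "B \<in> carrier_mat d d" and AB: "A' * B = 1\<^sub>m d" by auto
  have "(A' * B) $$ (d - 1, d - 1) = 1" using AB ed by auto
  moreover have "(A' * B) $$ (d - 1, d - 1) = 0"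
  proof -
    have r: "row A' (d - 1) = 0\<^sub>v d" using ed unfolding A'_def by (auto intro!: eq_vecI)
    show ?thesis using A' B ed r by auto
  qed
  ultimately show False by simp
qed

lemma surj_mat_dim_le:
  fixes A :: "complex mat"
  assumes A: "A \<in> carrier_mat e d" and surj: "\<forall>w\<in>carrier_vec e. \<exists>v\<in>carrier_vec d. A *\<^sub>v v = w"
  shows "e \<le> d"
proof -
  \<comment> \<open>A right inverse built from preimages of the unit vectors is injective.\<close>
  define pre where "pre j = (SOME v. v \<in> carrier_vec d \<and> A *\<^sub>v v = unit_vec e j)" for j
  have pre: "pre j \<in> carrier_vec d \<and> A *\<^sub>v pre j = unit_vec e j" if "j < e" for j
    unfolding pre_def by (rule someI_ex, insert surj that, auto)
  define M where "M = mat d e (\<lambda>(i,j). pre j $ i)"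
  have M: "M \<in> carrier_mat d e" unfolding M_def by auto
  have colM: "col M j = pre j" if "j < e" for j
    using pre[OF that] that unfolding M_def by auto
  have AM: "A * M = 1\<^sub>m e"
  proof (rule eq_matI)
    fix i j assume i: "i < dim_row (1\<^sub>m e :: complex mat)" and j: "j < dim_col (1\<^sub>m e :: complex mat)"
    have "(A * M) $$ (i,j) = row A i \<bullet> col M j" using A M i j by auto
    also have "\<dots> = row A i \<bullet> pre j" using colM j by auto
    also have "\<dots> = (A *\<^sub>v pre j) $ i" using A i by auto
    also have "\<dots> = unit_vec e j $ i" using pre j by auto
    finally show "(A * M) $$ (i,j) = 1\<^sub>m e $$ (i,j)" using i j by auto
  qed (insert A M, auto)
  have "\<forall>u\<in>carrier_vec e. M *\<^sub>v u = 0\<^sub>v d \<longrightarrow> u = 0\<^sub>v e"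
  proof (intro ballI impI)
    fix u :: "complex vec" assume u: "u \<in> carrier_vec e" and z: "M *\<^sub>v u = 0\<^sub>v d"
    have "u = (A * M) *\<^sub>v u" using AM u by auto
    also have "\<dots> = A *\<^sub>v (M *\<^sub>v u)" using A M u by auto
    also have "\<dots> = 0\<^sub>v e" using z A by auto
    finally show "u = 0\<^sub>v e" .
  qed
  from inj_mat_dim_le[OF M this] show ?thesis .
qed

lemma carrier_mat_no_cols_eq_zero: "A \<in> carrier_mat n 0 \<Longrightarrow> A = 0\<^sub>m n 0"
  by (rule eq_matI, auto)

lemma four_block_mat_inject:
  assumes "A \<in> carrier_mat n1 m1" "A' \<in> carrier_mat n1 m1" "B \<in> carrier_mat n1 m2" "B' \<in> carrier_mat n1 m2"
    "C \<in> carrier_mat n2 m1" "C' \<in> carrier_mat n2 m1" "D \<in> carrier_mat n2 m2" "D' \<in> carrier_mat n2 m2"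
    and eq: "four_block_mat A B C D = four_block_mat A' B' C' D'"
  shows "A = A' \<and> B = B' \<and> C = C' \<and> D = D'"
proof (intro conjI)
  let ?F = "four_block_mat A B C D" let ?F' = "four_block_mat A' B' C' D'"
  show "A = A'"
  proof (rule eq_matI)
    fix i j assume "i < dim_row A'" "j < dim_col A'"
    moreover have "?F $$ (i,j) = ?F' $$ (i,j)" by (simp only: eq)
    ultimately show "A $$ (i,j) = A' $$ (i,j)" using assms(1-8) by simp
  qed (insert assms, auto)
  show "B = B'"
  proof (rule eq_matI)
    fix i j assume "i < dim_row B'" "j < dim_col B'"
    moreover have "?F $$ (i,j + m1) = ?F' $$ (i,j + m1)" by (simp only: eq)
    ultimately show "B $$ (i,j) = B' $$ (i,j)" using assms(1-8) by simp
  qed (insert assms, auto)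
  show "C = C'"
  proof (rule eq_matI)
    fix i j assume "i < dim_row C'" "j < dim_col C'"
    moreover have "?F $$ (i + n1,j) = ?F' $$ (i + n1,j)" by (simp only: eq)
    ultimately show "C $$ (i,j) = C' $$ (i,j)" using assms(1-8) by simp
  qed (insert assms, auto)
  show "D = D'"
  proof (rule eq_matI)
    fix i j assume "i < dim_row D'" "j < dim_col D'"
    moreover have "?F $$ (i + n1,j + m1) = ?F' $$ (i + n1,j + m1)" by (simp only: eq)
    ultimately show "D $$ (i,j) = D' $$ (i,j)" using assms(1-8) by simp
  qed (insert assms, auto)
qed

lemma four_block_mat_mult_eq_one:
  fixes \<alpha> :: "complex mat"
  assumes c: "\<alpha> \<in> carrier_mat d d" "\<beta> \<in> carrier_mat d k" "\<gamma> \<in> carrier_mat k d" "\<delta> \<in> carrier_mat k k"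
    "\<alpha>' \<in> carrier_mat d d" "\<beta>' \<in> carrier_mat d k" "\<gamma>' \<in> carrier_mat k d" "\<delta>' \<in> carrier_mat k k"
    and eq: "four_block_mat \<alpha> \<beta> \<gamma> \<delta> * four_block_mat \<alpha>' \<beta>' \<gamma>' \<delta>' = 1\<^sub>m (d + k)"
  shows "\<alpha> * \<alpha>' + \<beta> * \<gamma>' = 1\<^sub>m d \<and> \<alpha> * \<beta>' + \<beta> * \<delta>' = 0\<^sub>m d k \<and>
    \<gamma> * \<alpha>' + \<delta> * \<gamma>' = 0\<^sub>m k d \<and> \<gamma> * \<beta>' + \<delta> * \<delta>' = 1\<^sub>m k"
proof -
  have "four_block_mat (\<alpha> * \<alpha>' + \<beta> * \<gamma>') (\<alpha> * \<beta>' + \<beta> * \<delta>') (\<gamma> * \<alpha>' + \<delta> * \<gamma>') (\<gamma> * \<beta>' + \<delta> * \<delta>')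
    = four_block_mat (1\<^sub>m d) (0\<^sub>m d k) (0\<^sub>m k d) (1\<^sub>m k)"
    using eq by (subst (asm) mult_four_block_mat[OF c], simp)
  from four_block_mat_inject[of _ d d _ _ k _ _ k, OF _ _ _ _ _ _ _ _ this] c show ?thesis by auto
qed

lemma mat_add_eq_zero_imp_eq_uminus:
  fixes X :: "complex mat"
  assumes "X \<in> carrier_mat n m" "Y \<in> carrier_mat n m" "X + Y = 0\<^sub>m n m"
  shows "Y = - X"
proof (rule eq_matI)
  fix i j assume ij: "i < dim_row (- X)" "j < dim_col (- X)"
  have h: "(X + Y) $$ (i,j) = 0\<^sub>m n m $$ (i,j)" by (simp only: assms(3))
  have "X $$ (i,j) + Y $$ (i,j) = 0" using h assms(1,2) ij by simp
  then show "Y $$ (i,j) = (- X) $$ (i,j)" using assms(1,2) ij by (simp add: eq_neg_iff_add_eq_0 add.commute)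
qed (insert assms, auto)

lemma minus_uminus_mat:
  fixes X :: "complex mat"
  assumes "X \<in> carrier_mat n m" "Y \<in> carrier_mat n m"
  shows "X - (- Y) = X + Y"
  by (rule eq_matI, insert assms, auto)

lemma inverse_mat_intertwines:
  fixes T B X Y :: "'a :: semiring_1 mat"
  assumes T: "T \<in> carrier_mat d d" and B: "B \<in> carrier_mat d d"
    and X: "X \<in> carrier_mat d d" and Y: "Y \<in> carrier_mat d d"
    and TB: "T * B = 1\<^sub>m d" and BT: "B * T = 1\<^sub>m d" and TXY: "T * X = Y * T"
  shows "B * Y = X * B"
proof -
  have "B * Y = B * Y * (T * B)" using TB B Y by simp
  also have "\<dots> = B * (Y * T) * B" using B Y T by (simp add: assoc_mult_mat[of _ d d _ d _ d])
  also have "\<dots> = B * (T * X) * B" by (simp only: TXY)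
  also have "\<dots> = (B * T) * X * B" using B X T by (simp add: assoc_mult_mat[of _ d d _ d _ d])
  also have "\<dots> = X * B" using BT X by simp
  finally show ?thesis .
qed

lemma mult_inverse_mat:
  fixes T B T' B' :: "'a :: semiring_1 mat"
  assumes T: "T \<in> carrier_mat d d" and B: "B \<in> carrier_mat d d"
    and T': "T' \<in> carrier_mat d d" and B': "B' \<in> carrier_mat d d"
    and TB: "T * B = 1\<^sub>m d" and BT: "B * T = 1\<^sub>m d" and TB': "T' * B' = 1\<^sub>m d" and BT': "B' * T' = 1\<^sub>m d"
  shows "T' * T * (B * B') = 1\<^sub>m d" and "B * B' * (T' * T) = 1\<^sub>m d"
proof -
  have "T' * T * (B * B') = T' * (T * B) * B'"
    using T B T' B' by (simp add: assoc_mult_mat[of _ d d _ d _ d])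
  then show "T' * T * (B * B') = 1\<^sub>m d" using TB TB' T' by simp
  have "B * B' * (T' * T) = B * (B' * T') * T"
    using T B T' B' by (simp add: assoc_mult_mat[of _ d d _ d _ d])
  then show "B * B' * (T' * T) = 1\<^sub>m d" using BT BT' B by simp
qed

lemma mult_intertwines:
  fixes T T' X Y Z :: "'a :: semiring_1 mat"
  assumes T: "T \<in> carrier_mat d d" and T': "T' \<in> carrier_mat d d"
    and X: "X \<in> carrier_mat d d" and Y: "Y \<in> carrier_mat d d" and Z: "Z \<in> carrier_mat d d"
    and TXY: "T * X = Y * T" and TYZ: "T' * Y = Z * T'"
  shows "T' * T * X = Z * (T' * T)"
proof -
  have "T' * T * X = T' * (T * X)" using T T' X by (simp add: assoc_mult_mat[of _ d d _ d _ d])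
  also have "\<dots> = (T' * Y) * T" using T T' Y by (simp add: TXY assoc_mult_mat[of _ d d _ d _ d])
  also have "\<dots> = Z * (T' * T)" using T T' Z by (simp add: TYZ assoc_mult_mat[of _ d d _ d _ d])
  finally show ?thesis .
qed

lemma unipotent_block_mat_mult:
  fixes B :: "'a :: ring_1 mat"
  assumes B: "B \<in> carrier_mat d k"
  shows "four_block_mat (1\<^sub>m d) B (0\<^sub>m k d) (1\<^sub>m k) * four_block_mat (1\<^sub>m d) (- B) (0\<^sub>m k d) (1\<^sub>m k)
    = 1\<^sub>m (d + k)"
proof -
  have "four_block_mat (1\<^sub>m d) B (0\<^sub>m k d) (1\<^sub>m k) * four_block_mat (1\<^sub>m d) (- B) (0\<^sub>m k d) (1\<^sub>m k)
    = four_block_mat (1\<^sub>m d * 1\<^sub>m d + B * 0\<^sub>m k d) (1\<^sub>m d * - B + B * 1\<^sub>m k)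
        (0\<^sub>m k d * 1\<^sub>m d + 1\<^sub>m k * 0\<^sub>m k d) (0\<^sub>m k d * - B + 1\<^sub>m k * 1\<^sub>m k)"
    by (rule mult_four_block_mat) (use B in auto)
  also have "\<dots> = four_block_mat (1\<^sub>m d) (0\<^sub>m d k) (0\<^sub>m k d) (1\<^sub>m k)"
    by (rule cong_four_block_mat) (use B in auto)
  finally show ?thesis by simp
qed

lemma swap_block_mat_mult:
  "four_block_mat (0\<^sub>m a b) (1\<^sub>m a) (1\<^sub>m b) (0\<^sub>m b a) * four_block_mat (0\<^sub>m b a) (1\<^sub>m b) (1\<^sub>m a) (0\<^sub>m a b)
    = (1\<^sub>m (a + b) :: complex mat)"
proof -
  have "four_block_mat (0\<^sub>m a b :: complex mat) (1\<^sub>m a) (1\<^sub>m b) (0\<^sub>m b a) * four_block_mat (0\<^sub>m b a) (1\<^sub>m b) (1\<^sub>m a) (0\<^sub>m a b)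
    = four_block_mat (0\<^sub>m a b * 0\<^sub>m b a + 1\<^sub>m a * 1\<^sub>m a) (0\<^sub>m a b * 1\<^sub>m b + 1\<^sub>m a * 0\<^sub>m a b)
        (1\<^sub>m b * 0\<^sub>m b a + 0\<^sub>m b a * 1\<^sub>m a) (1\<^sub>m b * 1\<^sub>m b + 0\<^sub>m b a * 0\<^sub>m a b)"
    by (rule mult_four_block_mat, auto)
  also have "\<dots> = four_block_mat (1\<^sub>m a) (0\<^sub>m a b) (0\<^sub>m b a) (1\<^sub>m b)"
    by (rule cong_four_block_mat, auto)
  finally show ?thesis by simp
qed

abbreviation block_diag :: "nat \<Rightarrow> nat \<Rightarrow> nat \<Rightarrow> nat \<Rightarrow> complex mat \<Rightarrow> complex mat \<Rightarrow> complex mat" where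
  "block_diag n1 n2 m1 m2 A D \<equiv> four_block_mat A (0\<^sub>m n1 m2) (0\<^sub>m n2 m1) D"

lemma block_diag_mult:
  assumes "A \<in> carrier_mat n1 m1" "D \<in> carrier_mat n2 m2" "A' \<in> carrier_mat m1 k1" "D' \<in> carrier_mat m2 k2"
  shows "block_diag n1 n2 m1 m2 A D * block_diag m1 m2 k1 k2 A' D' = block_diag n1 n2 k1 k2 (A * A') (D * D')"
  by (subst mult_four_block_mat[of _ n1 m1 _ m2 _ n2], insert assms, auto)

lemma block_diag_add:
  assumes "A \<in> carrier_mat n1 m1" "D \<in> carrier_mat n2 m2" "A' \<in> carrier_mat n1 m1" "D' \<in> carrier_mat n2 m2"
  shows "block_diag n1 n2 m1 m2 (A + A') (D + D') = block_diag n1 n2 m1 m2 A D + block_diag n1 n2 m1 m2 A' D'"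
  by (rule eq_matI, insert assms, auto)

lemma block_diag_minus:
  assumes "A \<in> carrier_mat n1 m1" "D \<in> carrier_mat n2 m2" "A' \<in> carrier_mat n1 m1" "D' \<in> carrier_mat n2 m2"
  shows "block_diag n1 n2 m1 m2 (A - A') (D - D') = block_diag n1 n2 m1 m2 A D - block_diag n1 n2 m1 m2 A' D'"
  by (rule eq_matI, insert assms, auto)

lemma block_diag_smult:
  assumes "A \<in> carrier_mat n1 m1" "D \<in> carrier_mat n2 m2"
  shows "block_diag n1 n2 m1 m2 (c \<cdot>\<^sub>m A) (c \<cdot>\<^sub>m D) = c \<cdot>\<^sub>m block_diag n1 n2 m1 m2 A D"
  by (rule eq_matI, insert assms, auto)

lemma four_block_mat_intertwines_block_diag:
  fixes \<alpha> :: "complex mat"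
  assumes c: "\<alpha> \<in> carrier_mat n1 m1" "\<beta> \<in> carrier_mat n1 m2" "\<gamma> \<in> carrier_mat n2 m1" "\<delta> \<in> carrier_mat n2 m2"
    and cp: "P \<in> carrier_mat m1 m1" "Q \<in> carrier_mat m2 m2" "P' \<in> carrier_mat n1 n1" "Q' \<in> carrier_mat n2 n2"
    and eq: "four_block_mat \<alpha> \<beta> \<gamma> \<delta> * block_diag m1 m2 m1 m2 P Q = block_diag n1 n2 n1 n2 P' Q' * four_block_mat \<alpha> \<beta> \<gamma> \<delta>"
  shows "\<alpha> * P = P' * \<alpha> \<and> \<beta> * Q = P' * \<beta> \<and> \<gamma> * P = Q' * \<gamma> \<and> \<delta> * Q = Q' * \<delta>"
proof -
  have 1: "four_block_mat \<alpha> \<beta> \<gamma> \<delta> * block_diag m1 m2 m1 m2 P Q = four_block_mat (\<alpha> * P) (\<beta> * Q) (\<gamma> * P) (\<delta> * Q)"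
    by (subst mult_four_block_mat[OF c], insert c cp, auto)
  have 2: "block_diag n1 n2 n1 n2 P' Q' * four_block_mat \<alpha> \<beta> \<gamma> \<delta> = four_block_mat (P' * \<alpha>) (P' * \<beta>) (Q' * \<gamma>) (Q' * \<delta>)"
    by (subst mult_four_block_mat[of _ n1 n1 _ n2 _ n2 _ _ m1 _ m2], insert c cp, auto)
  from eq 1 2 have "four_block_mat (\<alpha> * P) (\<beta> * Q) (\<gamma> * P) (\<delta> * Q) = four_block_mat (P' * \<alpha>) (P' * \<beta>) (Q' * \<gamma>) (Q' * \<delta>)" by simp
  from four_block_mat_inject[of _ n1 m1 _ _ m2 _ _ n2, OF _ _ _ _ _ _ _ _ this] c cp show ?thesis by auto
qed

lemma unipotent_block_mat_commute:
  fixes B P Q :: "complex mat"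
  assumes B: "B \<in> carrier_mat d k" and P: "P \<in> carrier_mat d d" and Q: "Q \<in> carrier_mat k k"
    and BQ: "B * Q = P * B"
  shows "four_block_mat (1\<^sub>m d) B (0\<^sub>m k d) (1\<^sub>m k) * block_diag d k d k P Q
    = block_diag d k d k P Q * four_block_mat (1\<^sub>m d) B (0\<^sub>m k d) (1\<^sub>m k)"
proof -
  have "four_block_mat (1\<^sub>m d) B (0\<^sub>m k d) (1\<^sub>m k) * block_diag d k d k P Q
      = four_block_mat P (B * Q) (0\<^sub>m k d) Q"
    by (subst mult_four_block_mat[of _ d d _ k _ k _ _ d _ k]) (use B P Q in auto)
  moreover have "block_diag d k d k P Q * four_block_mat (1\<^sub>m d) B (0\<^sub>m k d) (1\<^sub>m k)
      = four_block_mat P (P * B) (0\<^sub>m k d) Q"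
    by (subst mult_four_block_mat[of _ d d _ k _ k _ _ d _ k]) (use B P Q in auto)
  ultimately show ?thesis using BQ by simp
qed

lemma block_diag_mult_first_inclusion:
  assumes P: "P \<in> carrier_mat d d" and Q: "Q \<in> carrier_mat k k"
  shows "block_diag d k d k P Q * four_block_mat (1\<^sub>m d) (0\<^sub>m d 0) (0\<^sub>m k d) (0\<^sub>m k 0)
    = four_block_mat (1\<^sub>m d) (0\<^sub>m d 0) (0\<^sub>m k d) (0\<^sub>m k 0) * P"
proof -
  have P_block: "P = four_block_mat P (0\<^sub>m d 0) (0\<^sub>m 0 d) (0\<^sub>m 0 0)"
    using P by (intro eq_matI) auto
  have "block_diag d k d k P Q * four_block_mat (1\<^sub>m d) (0\<^sub>m d 0) (0\<^sub>m k d) (0\<^sub>m k 0)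
      = four_block_mat P (0\<^sub>m d 0) (0\<^sub>m k d) (0\<^sub>m k 0)"
    by (subst mult_four_block_mat[of _ d d _ k _ k _ _ d _ 0]) (use P Q in auto)
  moreover have "four_block_mat (1\<^sub>m d) (0\<^sub>m d 0) (0\<^sub>m k d) (0\<^sub>m k 0) * P
      = four_block_mat P (0\<^sub>m d 0) (0\<^sub>m k d) (0\<^sub>m k 0)"
    by (subst P_block, subst mult_four_block_mat[of _ d d _ 0 _ k _ _ d _ 0]) (use P in auto)
  ultimately show ?thesis by simp
qed

lemma schur_complement_right_inverse:
  fixes \<alpha> \<beta> \<gamma> \<delta> :: "complex mat"
  assumes c: "\<alpha> \<in> carrier_mat d d" "\<beta> \<in> carrier_mat d k" "\<gamma> \<in> carrier_mat k d" "\<delta> \<in> carrier_mat k k"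
    and c': "\<alpha>' \<in> carrier_mat d d" "\<beta>' \<in> carrier_mat d k" "\<gamma>' \<in> carrier_mat k d" "\<delta>' \<in> carrier_mat k k"
    and TSi: "four_block_mat \<alpha> \<beta> \<gamma> \<delta> * four_block_mat \<alpha>' \<beta>' \<gamma>' \<delta>' = 1\<^sub>m (d + k)"
    and ai: "\<alpha>i \<in> carrier_mat d d" "\<alpha>i * \<alpha> = 1\<^sub>m d"
  shows "(\<delta> - \<gamma> * (\<alpha>i * \<beta>)) * \<delta>' = 1\<^sub>m k"
proof -
  from four_block_mat_mult_eq_one[OF c c' TSi]
  have e2: "\<alpha> * \<beta>' + \<beta> * \<delta>' = 0\<^sub>m d k" and e4: "\<gamma> * \<beta>' + \<delta> * \<delta>' = 1\<^sub>m k" by auto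
  note cm = mult_carrier_mat
  have bd': "\<beta> * \<delta>' = - (\<alpha> * \<beta>')"
    by (rule mat_add_eq_zero_imp_eq_uminus[OF cm[OF c(1) c'(2)] cm[OF c(2) c'(4)] e2])
  have aib: "\<alpha>i * \<beta> \<in> carrier_mat d k" by (rule cm[OF ai(1) c(2)])
  have gaib: "\<gamma> * (\<alpha>i * \<beta>) \<in> carrier_mat k k" by (rule cm[OF c(3) aib])
  have m1: "\<gamma> * (\<alpha>i * \<beta>) * \<delta>' = - (\<gamma> * \<beta>')"
  proof -
    have "\<gamma> * (\<alpha>i * \<beta>) * \<delta>' = \<gamma> * (\<alpha>i * (\<beta> * \<delta>'))"
      by (simp only: assoc_mult_mat[OF c(3) aib c'(4)] assoc_mult_mat[OF ai(1) c(2) c'(4)])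
    also have "\<dots> = - (\<gamma> * (\<alpha>i * (\<alpha> * \<beta>')))"
    proof -
      have "\<alpha>i * - (\<alpha> * \<beta>') = - (\<alpha>i * (\<alpha> * \<beta>'))"
        by (rule uminus_mult_right_mat) (use ai(1) c(1) c'(2) in auto)
      moreover have "\<gamma> * - (\<alpha>i * (\<alpha> * \<beta>')) = - (\<gamma> * (\<alpha>i * (\<alpha> * \<beta>')))"
        by (rule uminus_mult_right_mat) (use ai(1) c(1,3) c'(2) in auto)
      ultimately show ?thesis by (simp only: bd')
    qed
    also have "\<alpha>i * (\<alpha> * \<beta>') = \<beta>'"
      by (simp only: assoc_mult_mat[OF ai(1) c(1) c'(2), symmetric] ai(2) left_mult_one_mat[OF c'(2)])
    finally show ?thesis .
  qed
  have "(\<delta> - \<gamma> * (\<alpha>i * \<beta>)) * \<delta>' = \<delta> * \<delta>' - (\<gamma> * (\<alpha>i * \<beta>)) * \<delta>'"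
    by (rule minus_mult_distrib_mat[OF c(4) gaib c'(4)])
  also have "\<dots> = \<delta> * \<delta>' + \<gamma> * \<beta>'"
    unfolding m1 by (rule minus_uminus_mat[OF cm[OF c(4) c'(4)] cm[OF c(3) c'(2)]])
  also have "\<dots> = 1\<^sub>m k" using e4 comm_add_mat[OF cm[OF c(4) c'(4)] cm[OF c(3) c'(2)]] by simp
  finally show "(\<delta> - \<gamma> * (\<alpha>i * \<beta>)) * \<delta>' = 1\<^sub>m k" .
qed

lemma schur_complement_left_inverse:
  fixes \<alpha> \<beta> \<gamma> \<delta> :: "complex mat"
  assumes c: "\<alpha> \<in> carrier_mat d d" "\<beta> \<in> carrier_mat d k" "\<gamma> \<in> carrier_mat k d" "\<delta> \<in> carrier_mat k k"
    and c': "\<alpha>' \<in> carrier_mat d d" "\<beta>' \<in> carrier_mat d k" "\<gamma>' \<in> carrier_mat k d" "\<delta>' \<in> carrier_mat k k"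
    and SiT: "four_block_mat \<alpha>' \<beta>' \<gamma>' \<delta>' * four_block_mat \<alpha> \<beta> \<gamma> \<delta> = 1\<^sub>m (d + k)"
    and ai: "\<alpha>i \<in> carrier_mat d d" "\<alpha> * \<alpha>i = 1\<^sub>m d"
  shows "\<delta>' * (\<delta> - \<gamma> * (\<alpha>i * \<beta>)) = 1\<^sub>m k"
proof -
  from four_block_mat_mult_eq_one[OF c' c SiT]
  have f3: "\<gamma>' * \<alpha> + \<delta>' * \<gamma> = 0\<^sub>m k d" and f4: "\<gamma>' * \<beta> + \<delta>' * \<delta> = 1\<^sub>m k" by auto
  note cm = mult_carrier_mat
  have dg': "\<delta>' * \<gamma> = - (\<gamma>' * \<alpha>)"
    by (rule mat_add_eq_zero_imp_eq_uminus[OF cm[OF c'(3) c(1)] cm[OF c'(4) c(3)] f3])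
  have aib: "\<alpha>i * \<beta> \<in> carrier_mat d k" by (rule cm[OF ai(1) c(2)])
  have gaib: "\<gamma> * (\<alpha>i * \<beta>) \<in> carrier_mat k k" by (rule cm[OF c(3) aib])
  have m2: "\<delta>' * (\<gamma> * (\<alpha>i * \<beta>)) = - (\<gamma>' * \<beta>)"
  proof -
    have "\<delta>' * (\<gamma> * (\<alpha>i * \<beta>)) = (\<delta>' * \<gamma>) * (\<alpha>i * \<beta>)"
      by (simp only: assoc_mult_mat[OF c'(4) c(3) aib])
    also have "\<dots> = - (\<gamma>' * \<alpha> * (\<alpha>i * \<beta>))"
      unfolding dg' by (rule uminus_mult_left_mat) (use ai(1) c(1,2) c'(3) in auto)
    also have "\<gamma>' * \<alpha> * (\<alpha>i * \<beta>) = \<gamma>' * \<beta>"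
      by (simp only: assoc_mult_mat[OF c'(3) c(1) aib] assoc_mult_mat[OF c(1) ai(1) c(2), symmetric]
          ai(2) left_mult_one_mat[OF c(2)])
    finally show ?thesis .
  qed
  have "\<delta>' * (\<delta> - \<gamma> * (\<alpha>i * \<beta>)) = \<delta>' * \<delta> - \<delta>' * (\<gamma> * (\<alpha>i * \<beta>))"
    by (rule mult_minus_distrib_mat[OF c'(4) c(4) gaib])
  also have "\<dots> = \<delta>' * \<delta> + \<gamma>' * \<beta>"
    unfolding m2 by (rule minus_uminus_mat[OF cm[OF c'(4) c(4)] cm[OF c'(3) c(2)]])
  also have "\<dots> = 1\<^sub>m k" using f4 comm_add_mat[OF cm[OF c'(4) c(4)] cm[OF c'(3) c(2)]] by simp
  finally show "\<delta>' * (\<delta> - \<gamma> * (\<alpha>i * \<beta>)) = 1\<^sub>m k" .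
qed

lemma schur_complement_intertwines:
  fixes \<alpha> \<beta> \<gamma> \<delta> :: "complex mat"
  assumes c: "\<alpha> \<in> carrier_mat d d" "\<beta> \<in> carrier_mat d k" "\<gamma> \<in> carrier_mat k d" "\<delta> \<in> carrier_mat k k"
    and cx: "P \<in> carrier_mat d d" "X \<in> carrier_mat k k" "Y \<in> carrier_mat k k"
    and ai: "\<alpha>i \<in> carrier_mat d d" "\<alpha> * \<alpha>i = 1\<^sub>m d" "\<alpha>i * \<alpha> = 1\<^sub>m d"
    and int: "\<alpha> * P = P * \<alpha>" "\<beta> * X = P * \<beta>" "\<gamma> * P = Y * \<gamma>" "\<delta> * X = Y * \<delta>"
  shows "(\<delta> - \<gamma> * (\<alpha>i * \<beta>)) * X = Y * (\<delta> - \<gamma> * (\<alpha>i * \<beta>))"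
proof -
  have aib: "\<alpha>i * \<beta> \<in> carrier_mat d k" and gaib: "\<gamma> * (\<alpha>i * \<beta>) \<in> carrier_mat k k"
    using ai(1) c by auto
  have air: "\<alpha>i * P = P * \<alpha>i"
    by (rule inverse_mat_intertwines[OF c(1) ai(1) cx(1) cx(1) ai(2,3) int(1)])
  have "(\<delta> - \<gamma> * (\<alpha>i * \<beta>)) * X = \<delta> * X - (\<gamma> * (\<alpha>i * \<beta>)) * X"
    by (rule minus_mult_distrib_mat[OF c(4) gaib cx(2)])
  also have "(\<gamma> * (\<alpha>i * \<beta>)) * X = \<gamma> * (\<alpha>i * (\<beta> * X))"
    by (simp only: assoc_mult_mat[OF c(3) aib cx(2)] assoc_mult_mat[OF ai(1) c(2) cx(2)])
  also have "\<dots> = \<gamma> * ((\<alpha>i * P) * \<beta>)" by (simp only: int(2) assoc_mult_mat[OF ai(1) cx(1) c(2)])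
  also have "\<dots> = (\<gamma> * P) * (\<alpha>i * \<beta>)"
    by (simp only: air assoc_mult_mat[OF cx(1) ai(1) c(2)] assoc_mult_mat[OF c(3) cx(1) aib])
  also have "\<dots> = Y * (\<gamma> * (\<alpha>i * \<beta>))" by (simp only: int(3) assoc_mult_mat[OF cx(3) c(3) aib])
  also have "\<delta> * X - Y * (\<gamma> * (\<alpha>i * \<beta>)) = Y * \<delta> - Y * (\<gamma> * (\<alpha>i * \<beta>))"
    by (simp only: int(4))
  also have "\<dots> = Y * (\<delta> - \<gamma> * (\<alpha>i * \<beta>))"
    by (rule mult_minus_distrib_mat[OF cx(3) c(4) gaib, symmetric])
  finally show ?thesis .
qed

section \<open>Equivalence and direct sums of representations\<close>

lemma rep_equiv_Pair_iff:
  "rep_equiv br S (d,\<rho>) (e,\<sigma>) \<longleftrightarrow> is_rep br S (d,\<rho>) \<and> is_rep br S (e,\<sigma>) \<and> d = e \<and>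
     (\<exists>T\<in>carrier_mat d d. \<exists>B\<in>carrier_mat d d. T * B = 1\<^sub>m d \<and> B * T = 1\<^sub>m d \<and> (\<forall>x\<in>S. T * \<rho> x = \<sigma> x * T))"
proof -
  have "(\<exists>T\<in>carrier_mat d d. invertible_mat T \<and> (\<forall>x\<in>S. T * \<rho> x = \<sigma> x * T)) \<longleftrightarrow>
    (\<exists>T\<in>carrier_mat d d. \<exists>B\<in>carrier_mat d d. T * B = 1\<^sub>m d \<and> B * T = 1\<^sub>m d \<and> (\<forall>x\<in>S. T * \<rho> x = \<sigma> x * T))"
    using invertible_mat_iff_inverse[of _ d] by blast
  then show ?thesis unfolding rep_equiv_def by auto
qed

lemma is_rep_carrier: "is_rep br S (d,\<rho>) \<Longrightarrow> x \<in> S \<Longrightarrow> \<rho> x \<in> carrier_mat d d"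
  unfolding is_rep_def by auto

lemma irreducible_rep_is_rep: "irreducible_rep br S r \<Longrightarrow> is_rep br S r"
  unfolding irreducible_rep_def by simp

lemma irreducible_rep_dim_pos: "irreducible_rep br S r \<Longrightarrow> fst r > 0"
  by (cases r, auto simp: irreducible_rep_def)

lemma rep_equiv_dim_eq: "rep_equiv br S r s \<Longrightarrow> fst r = fst s"
  by (cases r, cases s, auto simp: rep_equiv_Pair_iff)

lemma rep_equiv_refl: "is_rep br S r \<Longrightarrow> rep_equiv br S r r"
proof (cases r)
  case (Pair d \<rho>)
  assume r: "is_rep br S r"
  show ?thesis unfolding Pair rep_equiv_Pair_iff
    using r Pair is_rep_carrier[of br S d \<rho>]
    apply (intro conjI, auto intro!: bexI[of _ "1\<^sub>m d"])
    by (metis left_mult_one_mat right_mult_one_mat)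
qed

lemma rep_equiv_sym:
  assumes "rep_equiv br S r s"
  shows "rep_equiv br S s r"
proof (cases r; cases s)
  fix d \<rho> e \<sigma> assume r: "r = (d,\<rho>)" and s: "s = (e,\<sigma>)"
  from assms[unfolded r s rep_equiv_Pair_iff] obtain T B where
    reps: "is_rep br S (d,\<rho>)" "is_rep br S (e,\<sigma>)" and de: "d = e" and
    T: "T \<in> carrier_mat d d" and B: "B \<in> carrier_mat d d" and TB: "T * B = 1\<^sub>m d" and BT: "B * T = 1\<^sub>m d"
    and int: "\<forall>x\<in>S. T * \<rho> x = \<sigma> x * T" by blast
  have "B * \<sigma> x = \<rho> x * B" if x: "x \<in> S" for x
    using inverse_mat_intertwines[OF T B is_rep_carrier[OF reps(1) x] _ TB BT int[rule_format, OF x]]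
      is_rep_carrier[OF reps(2) x] de by simp
  then show ?thesis unfolding r s rep_equiv_Pair_iff using reps de T B TB BT by blast
qed

lemma rep_equiv_trans [trans]:
  assumes "rep_equiv br S r s" "rep_equiv br S s t"
  shows "rep_equiv br S r t"
proof (cases r; cases s; cases t)
  fix d \<rho> e \<sigma> f \<tau> assume r: "r = (d,\<rho>)" and s: "s = (e,\<sigma>)" and t: "t = (f,\<tau>)"
  from assms(1)[unfolded r s rep_equiv_Pair_iff] obtain T B where
    reps: "is_rep br S (d,\<rho>)" "is_rep br S (e,\<sigma>)" and de: "d = e" and
    T: "T \<in> carrier_mat d d" and B: "B \<in> carrier_mat d d" and TB: "T * B = 1\<^sub>m d" and BT: "B * T = 1\<^sub>m d"
    and int: "\<forall>x\<in>S. T * \<rho> x = \<sigma> x * T" by blast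
  from assms(2)[unfolded s t rep_equiv_Pair_iff] obtain T' B' where
    rep3: "is_rep br S (f,\<tau>)" and ef: "e = f" and
    T': "T' \<in> carrier_mat d d" and B': "B' \<in> carrier_mat d d" and TB': "T' * B' = 1\<^sub>m d" and BT': "B' * T' = 1\<^sub>m d"
    and int': "\<forall>x\<in>S. T' * \<sigma> x = \<tau> x * T'" using de by blast
  have "T' * T * (B * B') = 1\<^sub>m d" "B * B' * (T' * T) = 1\<^sub>m d"
    using mult_inverse_mat[OF T B T' B' TB BT TB' BT'] by auto
  moreover have "T' * T * \<rho> x = \<tau> x * (T' * T)" if x: "x \<in> S" for x
    using mult_intertwines[OF T T' is_rep_carrier[OF reps(1) x] _ _ int[rule_format, OF x] int'[rule_format, OF x]]
      is_rep_carrier[OF reps(2) x] is_rep_carrier[OF rep3 x] de ef by simp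
  ultimately show ?thesis unfolding r t rep_equiv_Pair_iff using reps rep3 de ef T B T' B'
    by (intro conjI, simp_all, intro bexI[of _ "T' * T"] bexI[of _ "B * B'"], auto)
qed

lemma rep_equiv_if_eq_on:
  assumes "is_rep br S (d,\<rho>)" "is_rep br S (d,\<sigma>)" "\<forall>x\<in>S. \<rho> x = \<sigma> x"
  shows "rep_equiv br S (d,\<rho>) (d,\<sigma>)"
proof -
  have "\<forall>x\<in>S. 1\<^sub>m d * \<rho> x = \<sigma> x * 1\<^sub>m d"
    using assms is_rep_carrier[OF assms(1)] is_rep_carrier[OF assms(2)]
    by (metis left_mult_one_mat right_mult_one_mat)
  then show ?thesis unfolding rep_equiv_Pair_iff using assms by (intro conjI, auto intro!: bexI[of _ "1\<^sub>m d"])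
qed

lemma is_rep_mono: "S' \<subseteq> S \<Longrightarrow> is_rep br S r \<Longrightarrow> is_rep br S' r"
  unfolding is_rep_def by (cases r, auto simp: subset_iff)

lemma rep_equiv_mono:
  assumes "S' \<subseteq> S" "rep_equiv br S r s"
  shows "rep_equiv br S' r s"
proof (cases r; cases s)
  fix d \<rho> e \<sigma> assume r: "r = (d,\<rho>)" and s: "s = (e,\<sigma>)"
  from assms(2)[unfolded r s rep_equiv_Pair_iff] obtain T B where
    h: "is_rep br S (d,\<rho>)" "is_rep br S (e,\<sigma>)" "d = e" "T \<in> carrier_mat d d" "B \<in> carrier_mat d d"
       "T * B = 1\<^sub>m d" "B * T = 1\<^sub>m d" "\<forall>x\<in>S. T * \<rho> x = \<sigma> x * T" by blast
  have "is_rep br S' (d,\<rho>)" "is_rep br S' (e,\<sigma>)" using is_rep_mono[OF assms(1)] h by auto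
  then show ?thesis unfolding r s rep_equiv_Pair_iff using h assms(1) by blast
qed

lemma dsum2_Pair: "dsum2 (d1,\<rho>1) (d2,\<rho>2) = (d1 + d2, \<lambda>x. block_diag d1 d2 d1 d2 (\<rho>1 x) (\<rho>2 x))"
  unfolding dsum2_def by simp

lemma is_rep_dsum2:
  assumes "is_rep br S r" "is_rep br S s"
  shows "is_rep br S (dsum2 r s)"
proof (cases r; cases s)
  fix d1 \<rho>1 d2 \<rho>2 assume r: "r = (d1,\<rho>1)" and s: "s = (d2,\<rho>2)"
  note A = assms[unfolded r s is_rep_def, simplified]
  show ?thesis unfolding r s dsum2_Pair is_rep_def split
  proof (intro conjI ballI allI)
    fix x assume x: "x \<in> S"
    show "block_diag d1 d2 d1 d2 (\<rho>1 x) (\<rho>2 x) \<in> carrier_mat (d1 + d2) (d1 + d2)" using A x by auto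
  next
    fix x y assume x: "x \<in> S" and y: "y \<in> S"
    show "block_diag d1 d2 d1 d2 (\<rho>1 (x + y)) (\<rho>2 (x + y)) = block_diag d1 d2 d1 d2 (\<rho>1 x) (\<rho>2 x) + block_diag d1 d2 d1 d2 (\<rho>1 y) (\<rho>2 y)"
      using A x y by (simp add: block_diag_add)
    show "block_diag d1 d2 d1 d2 (\<rho>1 (br x y)) (\<rho>2 (br x y)) = block_diag d1 d2 d1 d2 (\<rho>1 x) (\<rho>2 x) * block_diag d1 d2 d1 d2 (\<rho>1 y) (\<rho>2 y)
      - block_diag d1 d2 d1 d2 (\<rho>1 y) (\<rho>2 y) * block_diag d1 d2 d1 d2 (\<rho>1 x) (\<rho>2 x)"
      using A x y by (simp add: block_diag_mult, subst block_diag_minus, auto intro!: mult_carrier_mat)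
  next
    fix a :: real and x assume x: "x \<in> S"
    show "block_diag d1 d2 d1 d2 (\<rho>1 (a *\<^sub>R x)) (\<rho>2 (a *\<^sub>R x)) = complex_of_real a \<cdot>\<^sub>m block_diag d1 d2 d1 d2 (\<rho>1 x) (\<rho>2 x)"
      using A x by (simp add: block_diag_smult)
  qed
qed

lemma dsum2_cong:
  assumes "rep_equiv br S r r'" "rep_equiv br S s s'"
  shows "rep_equiv br S (dsum2 r s) (dsum2 r' s')"
proof (cases r; cases r'; cases s; cases s')
  fix d1 \<rho>1 d1' \<rho>1' d2 \<rho>2 d2' \<rho>2' assume r: "r = (d1,\<rho>1)" and r': "r' = (d1',\<rho>1')"
    and s: "s = (d2,\<rho>2)" and s': "s' = (d2',\<rho>2')"
  from assms(1)[unfolded r r' rep_equiv_Pair_iff] obtain T1 B1 where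
    reps1: "is_rep br S (d1,\<rho>1)" "is_rep br S (d1',\<rho>1')" and d1: "d1' = d1" and
    T1: "T1 \<in> carrier_mat d1 d1" and B1: "B1 \<in> carrier_mat d1 d1" and TB1: "T1 * B1 = 1\<^sub>m d1" and BT1: "B1 * T1 = 1\<^sub>m d1"
    and int1: "\<forall>x\<in>S. T1 * \<rho>1 x = \<rho>1' x * T1" by metis
  from assms(2)[unfolded s s' rep_equiv_Pair_iff] obtain T2 B2 where
    reps2: "is_rep br S (d2,\<rho>2)" "is_rep br S (d2',\<rho>2')" and d2: "d2' = d2" and
    T2: "T2 \<in> carrier_mat d2 d2" and B2: "B2 \<in> carrier_mat d2 d2" and TB2: "T2 * B2 = 1\<^sub>m d2" and BT2: "B2 * T2 = 1\<^sub>m d2"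
    and int2: "\<forall>x\<in>S. T2 * \<rho>2 x = \<rho>2' x * T2" by metis
  note c = is_rep_carrier[OF reps1(1)] is_rep_carrier[OF reps1(2)] is_rep_carrier[OF reps2(1)] is_rep_carrier[OF reps2(2)]
  let ?T = "block_diag d1 d2 d1 d2 T1 T2" let ?B = "block_diag d1 d2 d1 d2 B1 B2"
  have "?T * ?B = 1\<^sub>m (d1 + d2)" using T1 T2 B1 B2 TB1 TB2 by (simp add: block_diag_mult)
  moreover have "?B * ?T = 1\<^sub>m (d1 + d2)" using T1 T2 B1 B2 BT1 BT2 by (simp add: block_diag_mult)
  moreover have "\<forall>x\<in>S. ?T * block_diag d1 d2 d1 d2 (\<rho>1 x) (\<rho>2 x) = block_diag d1 d2 d1 d2 (\<rho>1' x) (\<rho>2' x) * ?T"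
    using T1 T2 c int1 int2 d1 d2 by (auto simp: block_diag_mult)
  ultimately show ?thesis unfolding r r' s s' dsum2_Pair rep_equiv_Pair_iff d1 d2
    using is_rep_dsum2[OF reps1(1) reps2(1)] is_rep_dsum2[OF reps1(2) reps2(2)] T1 T2 B1 B2
    unfolding dsum2_Pair d1 d2
    by (intro conjI, simp_all, intro bexI[of _ ?T] bexI[of _ ?B], auto)
qed

lemma dsum2_commute:
  assumes "is_rep br S r" "is_rep br S s"
  shows "rep_equiv br S (dsum2 r s) (dsum2 s r)"
proof (cases r; cases s)
  fix d1 \<rho>1 d2 \<rho>2 assume r: "r = (d1,\<rho>1)" and s: "s = (d2,\<rho>2)"
  note c = is_rep_carrier[OF assms(1)[unfolded r]] is_rep_carrier[OF assms(2)[unfolded s]]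
  let ?T = "four_block_mat (0\<^sub>m d2 d1 :: complex mat) (1\<^sub>m d2) (1\<^sub>m d1) (0\<^sub>m d1 d2)"
  let ?B = "four_block_mat (0\<^sub>m d1 d2 :: complex mat) (1\<^sub>m d1) (1\<^sub>m d2) (0\<^sub>m d2 d1)"
  have T0: "?T \<in> carrier_mat (d2+d1) (d1+d2)" by (rule four_block_carrier_mat, auto)
  have T: "?T \<in> carrier_mat (d1+d2) (d1+d2)" using T0 by (simp only: add.commute[of d2 d1])
  have B0: "?B \<in> carrier_mat (d1+d2) (d2+d1)" by (rule four_block_carrier_mat, auto)
  have B: "?B \<in> carrier_mat (d1+d2) (d1+d2)" using B0 by (simp only: add.commute[of d2 d1])
  have TB: "?T * ?B = 1\<^sub>m (d2 + d1)"
    by (rule swap_block_mat_mult)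
  have BT: "?B * ?T = 1\<^sub>m (d1 + d2)"
    by (rule swap_block_mat_mult)
  have int: "\<forall>x\<in>S. ?T * block_diag d1 d2 d1 d2 (\<rho>1 x) (\<rho>2 x) = block_diag d2 d1 d2 d1 (\<rho>2 x) (\<rho>1 x) * ?T"
  proof
    fix x assume x: "x \<in> S"
    note cx = c[OF x]
    have "?T * block_diag d1 d2 d1 d2 (\<rho>1 x) (\<rho>2 x) = four_block_mat (0\<^sub>m d2 d1) (\<rho>2 x) (\<rho>1 x) (0\<^sub>m d1 d2)"
      by (subst mult_four_block_mat[of _ d2 d1 _ d2 _ d1 _ _ d1 _ d2], insert cx, auto)
    moreover have "block_diag d2 d1 d2 d1 (\<rho>2 x) (\<rho>1 x) * ?T = four_block_mat (0\<^sub>m d2 d1) (\<rho>2 x) (\<rho>1 x) (0\<^sub>m d1 d2)"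
      by (subst mult_four_block_mat[of _ d2 d2 _ d1 _ d1 _ _ d1 _ d2], insert cx, auto)
    ultimately show "?T * block_diag d1 d2 d1 d2 (\<rho>1 x) (\<rho>2 x) = block_diag d2 d1 d2 d1 (\<rho>2 x) (\<rho>1 x) * ?T" by simp
  qed
  have eq: "d2 + d1 = d1 + d2" by simp
  have main: "\<exists>T\<in>carrier_mat (d1 + d2) (d1 + d2). \<exists>B\<in>carrier_mat (d1 + d2) (d1 + d2).
     T * B = 1\<^sub>m (d1 + d2) \<and> B * T = 1\<^sub>m (d1 + d2) \<and>
     (\<forall>x\<in>S. T * block_diag d1 d2 d1 d2 (\<rho>1 x) (\<rho>2 x) = block_diag d2 d1 d2 d1 (\<rho>2 x) (\<rho>1 x) * T)"
    apply (rule bexI[of _ ?T], rule bexI[of _ ?B])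
    using T B TB BT int unfolding eq by auto
  show ?thesis unfolding r s dsum2_Pair rep_equiv_Pair_iff
    using is_rep_dsum2[OF assms(1) assms(2)] is_rep_dsum2[OF assms(2) assms(1)] main
    unfolding r s dsum2_Pair by simp
qed

lemma dsum2_assoc:
  assumes "is_rep br S r" "is_rep br S s" "is_rep br S t"
  shows "rep_equiv br S (dsum2 (dsum2 r s) t) (dsum2 r (dsum2 s t))"
proof (cases r; cases s; cases t)
  fix d1 \<rho>1 d2 \<rho>2 d3 \<rho>3 assume r: "r = (d1,\<rho>1)" and s: "s = (d2,\<rho>2)" and t: "t = (d3,\<rho>3)"
  note c = is_rep_carrier[OF assms(1)[unfolded r]] is_rep_carrier[OF assms(2)[unfolded s]]
    is_rep_carrier[OF assms(3)[unfolded t]]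
  have 1: "is_rep br S (dsum2 (dsum2 r s) t)" "is_rep br S (dsum2 r (dsum2 s t))"
    using assms by (auto intro!: is_rep_dsum2)
  have eq: "\<forall>x\<in>S. block_diag (d1+d2) d3 (d1+d2) d3 (block_diag d1 d2 d1 d2 (\<rho>1 x) (\<rho>2 x)) (\<rho>3 x)
     = block_diag d1 (d2+d3) d1 (d2+d3) (\<rho>1 x) (block_diag d2 d3 d2 d3 (\<rho>2 x) (\<rho>3 x))"
  proof
    fix x assume x: "x \<in> S"
    note cx = c[OF x]
    show "block_diag (d1+d2) d3 (d1+d2) d3 (block_diag d1 d2 d1 d2 (\<rho>1 x) (\<rho>2 x)) (\<rho>3 x)
     = block_diag d1 (d2+d3) d1 (d2+d3) (\<rho>1 x) (block_diag d2 d3 d2 d3 (\<rho>2 x) (\<rho>3 x))"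
      by (rule eq_matI, insert cx, auto)
  qed
  show ?thesis using 1 eq rep_equiv_if_eq_on[of br S "d1+d2+d3"]
    unfolding r s t dsum2_Pair by (simp add: add.assoc)
qed

definition zero_rep :: "'g rep" where "zero_rep = (0, \<lambda>x. 0\<^sub>m 0 0)"

lemma is_rep_zero_rep: "is_rep br S zero_rep"
  unfolding zero_rep_def is_rep_def by (auto intro!: eq_matI)

lemma dsum2_zero_rep_left:
  assumes "is_rep br S r"
  shows "rep_equiv br S (dsum2 zero_rep r) r"
proof (cases r)
  case (Pair d \<rho>)
  note c = is_rep_carrier[OF assms[unfolded Pair]]
  have "is_rep br S (dsum2 zero_rep r)" using is_rep_zero_rep assms by (rule is_rep_dsum2)
  moreover have "\<forall>x\<in>S. block_diag 0 d 0 d (0\<^sub>m 0 0) (\<rho> x) = \<rho> x"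
    using c by (auto intro!: eq_matI)
  ultimately show ?thesis using rep_equiv_if_eq_on[of br S d] assms unfolding Pair zero_rep_def dsum2_Pair by simp
qed

lemma dsum_list_simps: "dsum_list [] = zero_rep" "dsum_list (r # rs) = dsum2 r (dsum_list rs)"
  unfolding dsum_list_def zero_rep_def by auto

lemma is_rep_dsum_list: "\<forall>r\<in>set rs. is_rep br S r \<Longrightarrow> is_rep br S (dsum_list rs)"
  by (induction rs, auto simp: dsum_list_simps is_rep_zero_rep intro!: is_rep_dsum2)

lemma dim_dsum_list: "fst (dsum_list rs) = sum_list (map fst rs)"
  by (induction rs, auto simp: dsum_list_simps zero_rep_def dsum2_def split: prod.splits)

lemma dsum_list_append:
  assumes "\<forall>r\<in>set xs. is_rep br S r" "\<forall>r\<in>set ys. is_rep br S r"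
  shows "rep_equiv br S (dsum_list (xs @ ys)) (dsum2 (dsum_list xs) (dsum_list ys))"
  using assms(1)
proof (induction xs)
  case Nil
  show ?case unfolding dsum_list_simps append.simps
    by (rule rep_equiv_sym, rule dsum2_zero_rep_left, rule is_rep_dsum_list, fact)
next
  case (Cons x xs)
  have x: "is_rep br S x" and xs: "\<forall>r\<in>set xs. is_rep br S r" using Cons by auto
  have Lxs: "is_rep br S (dsum_list xs)" and Lys: "is_rep br S (dsum_list ys)"
    using xs assms(2) by (auto intro!: is_rep_dsum_list)
  have "rep_equiv br S (dsum2 x (dsum_list (xs @ ys))) (dsum2 x (dsum2 (dsum_list xs) (dsum_list ys)))"
    by (rule dsum2_cong[OF rep_equiv_refl[OF x] Cons.IH[OF xs]])
  also note dsum2_assoc[OF x Lxs Lys, THEN rep_equiv_sym]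
  finally show ?case unfolding dsum_list_simps append.simps .
qed

lemma dsum_list_perm:
  assumes "mset xs = mset ys" "\<forall>r\<in>set xs. is_rep br S r"
  shows "rep_equiv br S (dsum_list xs) (dsum_list ys)"
  using assms
proof (induction xs arbitrary: ys)
  case Nil
  then show ?case by (simp add: dsum_list_simps rep_equiv_refl is_rep_zero_rep)
next
  case (Cons x xs)
  have "x \<in> set ys" using Cons.prems(1) by (metis list.set_intros(1) set_mset_mset)
  then obtain ys1 ys2 where ys: "ys = ys1 @ x # ys2" by (meson split_list)
  have m: "mset xs = mset (ys1 @ ys2)" using Cons.prems(1) ys by simp
  have x: "is_rep br S x" and xs: "\<forall>r\<in>set xs. is_rep br S r" using Cons.prems by auto
  have sety: "set ys = set (x # xs)" using Cons.prems(1) by (metis set_mset_mset)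
  have y1: "\<forall>r\<in>set ys1. is_rep br S r" and y2: "\<forall>r\<in>set ys2. is_rep br S r"
    using Cons.prems(2) sety ys by auto
  have L1: "is_rep br S (dsum_list ys1)" and L2: "is_rep br S (dsum_list ys2)"
    using y1 y2 by (auto intro!: is_rep_dsum_list)
  have "rep_equiv br S (dsum_list ys) (dsum2 (dsum_list ys1) (dsum_list (x # ys2)))"
    unfolding ys by (rule dsum_list_append, insert y1 y2 x, auto)
  also have "dsum_list (x # ys2) = dsum2 x (dsum_list ys2)" by (simp add: dsum_list_simps)
  also have "rep_equiv br S (dsum2 (dsum_list ys1) (dsum2 x (dsum_list ys2))) (dsum2 (dsum2 (dsum_list ys1) x) (dsum_list ys2))"
    by (rule rep_equiv_sym, rule dsum2_assoc[OF L1 x L2])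
  also have "rep_equiv br S \<dots> (dsum2 (dsum2 x (dsum_list ys1)) (dsum_list ys2))"
    by (rule dsum2_cong[OF dsum2_commute[OF L1 x] rep_equiv_refl[OF L2]])
  also have "rep_equiv br S \<dots> (dsum2 x (dsum2 (dsum_list ys1) (dsum_list ys2)))"
    by (rule dsum2_assoc[OF x L1 L2])
  also have "rep_equiv br S \<dots> (dsum2 x (dsum_list (ys1 @ ys2)))"
    by (rule dsum2_cong[OF rep_equiv_refl[OF x] rep_equiv_sym[OF dsum_list_append[OF y1 y2]]])
  also have "rep_equiv br S \<dots> (dsum2 x (dsum_list xs))"
    by (rule dsum2_cong[OF rep_equiv_refl[OF x] rep_equiv_sym[OF Cons.IH[OF m xs]]])
  finally show ?case unfolding dsum_list_simps by (rule rep_equiv_sym)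
qed

lemma dsum_list_concat_equiv:
  assumes "\<forall>i\<in>set Is. rep_equiv br S (\<phi>s i) (dsum_list (map \<psi>s (L i)))"
    and "\<forall>i\<in>set Is. \<forall>j\<in>set (L i). is_rep br S (\<psi>s j)"
  shows "rep_equiv br S (dsum_list (map \<phi>s Is)) (dsum_list (map \<psi>s (concat (map L Is))))"
  using assms
proof (induction Is)
  case Nil
  then show ?case by (simp add: dsum_list_simps rep_equiv_refl is_rep_zero_rep)
next
  case (Cons i Is)
  have 1: "rep_equiv br S (dsum_list (map \<phi>s (i # Is))) (dsum2 (dsum_list (map \<psi>s (L i))) (dsum_list (map \<psi>s (concat (map L Is)))))"
    unfolding list.map dsum_list_simps by (rule dsum2_cong, insert Cons, auto)
  have 2: "rep_equiv br S (dsum2 (dsum_list (map \<psi>s (L i))) (dsum_list (map \<psi>s (concat (map L Is))))) (dsum_list (map \<psi>s (L i) @ map \<psi>s (concat (map L Is))))"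
    by (rule rep_equiv_sym, rule dsum_list_append, insert Cons.prems(2), auto)
  show ?case using rep_equiv_trans[OF 1 2] by simp
qed

section \<open>Schur's lemma and cancellation of irreducible summands\<close>

lemma intertwiner_from_irreducible_inj:
  assumes irr: "irreducible_rep br S (d,\<rho>)" and rep: "is_rep br S (e,\<sigma>)"
    and al: "\<alpha> \<in> carrier_mat e d" and int: "\<forall>x\<in>S. \<alpha> * \<rho> x = \<sigma> x * \<alpha>" and nz: "\<alpha> \<noteq> 0\<^sub>m e d"
    and v: "v \<in> carrier_vec d" and av: "\<alpha> *\<^sub>v v = 0\<^sub>v e"
  shows "v = 0\<^sub>v d"
proof -
  let ?W = "{v \<in> carrier_vec d. \<alpha> *\<^sub>v v = 0\<^sub>v e}"
  have repa: "is_rep br S (d,\<rho>)" using irr unfolding irreducible_rep_def by auto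
  note ca = is_rep_carrier[OF repa] and cb = is_rep_carrier[OF rep]
  have sub: "is_subspace d ?W" unfolding is_subspace_def
  proof (intro conjI ballI allI)
    fix v w assume v: "v \<in> ?W" and w: "w \<in> ?W"
    show "v + w \<in> ?W" using v w al by (auto simp: mult_add_distrib_mat_vec)
  next
    fix c :: complex and v assume v: "v \<in> ?W"
    show "c \<cdot>\<^sub>v v \<in> ?W" using v al by (auto simp: mult_mat_vec)
  qed (insert al, auto)
  have inv: "\<forall>x\<in>S. \<forall>v\<in>?W. \<rho> x *\<^sub>v v \<in> ?W"
  proof (intro ballI)
    fix x v assume x: "x \<in> S" and v: "v \<in> ?W"
    have "\<alpha> *\<^sub>v (\<rho> x *\<^sub>v v) = (\<alpha> * \<rho> x) *\<^sub>v v" using al ca[OF x] v by auto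
    also have "\<dots> = (\<sigma> x * \<alpha>) *\<^sub>v v" using int x by simp
    also have "\<dots> = \<sigma> x *\<^sub>v (\<alpha> *\<^sub>v v)" using al cb[OF x] v by auto
    also have "\<dots> = 0\<^sub>v e" using v cb[OF x] by auto
    finally show "\<rho> x *\<^sub>v v \<in> ?W" using v ca[OF x] by auto
  qed
  have "?W = {0\<^sub>v d} \<or> ?W = carrier_vec d" using irr sub inv unfolding irreducible_rep_def by auto
  moreover have "?W \<noteq> carrier_vec d"
  proof
    assume "?W = carrier_vec d"
    then have "\<forall>v\<in>carrier_vec d. \<alpha> *\<^sub>v v = 0\<^sub>v e" by auto
    then show False using mat_eq_zero_if_mult_vec_zero[OF al] nz by auto
  qed
  ultimately show ?thesis using v av by auto
qed

lemma intertwiner_to_irreducible_surj: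
  assumes rep: "is_rep br S (d,\<rho>)" and irr: "irreducible_rep br S (e,\<sigma>)"
    and al: "\<alpha> \<in> carrier_mat e d" and int: "\<forall>x\<in>S. \<alpha> * \<rho> x = \<sigma> x * \<alpha>" and nz: "\<alpha> \<noteq> 0\<^sub>m e d"
    and w: "w \<in> carrier_vec e"
  shows "\<exists>v\<in>carrier_vec d. \<alpha> *\<^sub>v v = w"
proof -
  let ?W = "(\<lambda>v. \<alpha> *\<^sub>v v) ` carrier_vec d"
  have repb: "is_rep br S (e,\<sigma>)" using irr unfolding irreducible_rep_def by auto
  note ca = is_rep_carrier[OF rep] and cb = is_rep_carrier[OF repb]
  have sub: "is_subspace e ?W" unfolding is_subspace_def
  proof (intro conjI ballI allI)
    show "?W \<subseteq> carrier_vec e" using al by auto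
    show "0\<^sub>v e \<in> ?W" using al by (intro image_eqI[of _ _ "0\<^sub>v d"], auto)
  next
    fix v w assume v: "v \<in> ?W" and w: "w \<in> ?W"
    then obtain v' w' where "v' \<in> carrier_vec d" "w' \<in> carrier_vec d" "v = \<alpha> *\<^sub>v v'" "w = \<alpha> *\<^sub>v w'" by auto
    then show "v + w \<in> ?W" using al by (intro image_eqI[of _ _ "v' + w'"], auto simp: mult_add_distrib_mat_vec)
  next
    fix c :: complex and v assume v: "v \<in> ?W"
    then obtain v' where "v' \<in> carrier_vec d" "v = \<alpha> *\<^sub>v v'" by auto
    then show "c \<cdot>\<^sub>v v \<in> ?W" using al by (intro image_eqI[of _ _ "c \<cdot>\<^sub>v v'"], auto simp: mult_mat_vec)
  qed
  have inv: "\<forall>x\<in>S. \<forall>v\<in>?W. \<sigma> x *\<^sub>v v \<in> ?W"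
  proof (intro ballI)
    fix x v assume x: "x \<in> S" and v: "v \<in> ?W"
    then obtain v' where v': "v' \<in> carrier_vec d" "v = \<alpha> *\<^sub>v v'" by auto
    have "\<sigma> x *\<^sub>v v = (\<sigma> x * \<alpha>) *\<^sub>v v'" using al cb[OF x] v' by auto
    also have "\<dots> = (\<alpha> * \<rho> x) *\<^sub>v v'" using int x by simp
    also have "\<dots> = \<alpha> *\<^sub>v (\<rho> x *\<^sub>v v')" using al ca[OF x] v' by auto
    finally show "\<sigma> x *\<^sub>v v \<in> ?W" using v' ca[OF x] by auto
  qed
  have "?W = {0\<^sub>v e} \<or> ?W = carrier_vec e" using irr sub inv unfolding irreducible_rep_def by auto
  moreover have "?W \<noteq> {0\<^sub>v e}"
  proof
    assume "?W = {0\<^sub>v e}"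
    then have "\<forall>v\<in>carrier_vec d. \<alpha> *\<^sub>v v = 0\<^sub>v e" by auto
    then show False using mat_eq_zero_if_mult_vec_zero[OF al] nz by auto
  qed
  ultimately have "?W = carrier_vec e" by auto
  then show ?thesis using w by (metis imageE)
qed

lemma schur_rep_equiv:
  assumes ia: "irreducible_rep br S (d,\<rho>)" and ib: "irreducible_rep br S (e,\<sigma>)"
    and al: "\<alpha> \<in> carrier_mat e d" and int: "\<forall>x\<in>S. \<alpha> * \<rho> x = \<sigma> x * \<alpha>" and nz: "\<alpha> \<noteq> 0\<^sub>m e d"
  shows "rep_equiv br S (d,\<rho>) (e,\<sigma>)"
proof -
  have ra: "is_rep br S (d,\<rho>)" and rb: "is_rep br S (e,\<sigma>)" using ia ib unfolding irreducible_rep_def by auto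
  have inj: "\<forall>v\<in>carrier_vec d. \<alpha> *\<^sub>v v = 0\<^sub>v e \<longrightarrow> v = 0\<^sub>v d"
    using intertwiner_from_irreducible_inj[OF ia rb al int nz] by auto
  have sur: "\<forall>w\<in>carrier_vec e. \<exists>v\<in>carrier_vec d. \<alpha> *\<^sub>v v = w"
    using intertwiner_to_irreducible_surj[OF ra ib al int nz] by auto
  have de: "d = e" using inj_mat_dim_le[OF al inj] surj_mat_dim_le[OF al sur] by auto
  have al': "\<alpha> \<in> carrier_mat d d" using al de by simp
  have inj': "\<forall>v\<in>carrier_vec d. \<alpha> *\<^sub>v v = 0\<^sub>v d \<longrightarrow> v = 0\<^sub>v d" using inj de by simp
  from inj_square_mat_invertible[OF al' inj'] obtain B where B: "B \<in> carrier_mat d d" "\<alpha> * B = 1\<^sub>m d" "B * \<alpha> = 1\<^sub>m d" by blast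
  show ?thesis unfolding rep_equiv_Pair_iff
    apply (intro conjI)
       apply (rule ra)
      apply (rule rb)
     apply (rule de)
    apply (rule bexI[OF _ al'], rule bexI[OF _ B(1)])
    using B int by blast
qed

lemma dsum2_cancel_if_invertible_corner:
  fixes \<alpha> \<beta> \<gamma> \<delta> Si :: "complex mat"
  assumes rX: "is_rep br S (k,\<xi>)" and rY: "is_rep br S (k,\<eta>)" and ra: "is_rep br S (d,\<rho>)"
    and c: "\<alpha> \<in> carrier_mat d d" "\<beta> \<in> carrier_mat d k" "\<gamma> \<in> carrier_mat k d" "\<delta> \<in> carrier_mat k k"
    and Si: "Si \<in> carrier_mat (d + k) (d + k)"
    and TSi: "four_block_mat \<alpha> \<beta> \<gamma> \<delta> * Si = 1\<^sub>m (d + k)"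
    and SiT: "Si * four_block_mat \<alpha> \<beta> \<gamma> \<delta> = 1\<^sub>m (d + k)"
    and int: "\<forall>x\<in>S. four_block_mat \<alpha> \<beta> \<gamma> \<delta> * block_diag d k d k (\<rho> x) (\<xi> x)
      = block_diag d k d k (\<rho> x) (\<eta> x) * four_block_mat \<alpha> \<beta> \<gamma> \<delta>"
    and ai: "\<alpha>i \<in> carrier_mat d d" "\<alpha> * \<alpha>i = 1\<^sub>m d" "\<alpha>i * \<alpha> = 1\<^sub>m d"
  shows "rep_equiv br S (k,\<xi>) (k,\<eta>)"
proof -
  obtain \<alpha>' \<beta>' \<gamma>' \<delta>' where sb: "split_block Si d d = (\<alpha>',\<beta>',\<gamma>',\<delta>')" by (metis prod_cases4)
  note sp = split_block[OF sb, of k k]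
  have c': "\<alpha>' \<in> carrier_mat d d" "\<beta>' \<in> carrier_mat d k" "\<gamma>' \<in> carrier_mat k d" "\<delta>' \<in> carrier_mat k k"
    and Si_eq: "Si = four_block_mat \<alpha>' \<beta>' \<gamma>' \<delta>'" using sp Si by auto
  define K where "K = \<delta> - \<gamma> * (\<alpha>i * \<beta>)"
  have K: "K \<in> carrier_mat k k" unfolding K_def using c ai(1) by auto
  have K_inv: "K * \<delta>' = 1\<^sub>m k" "\<delta>' * K = 1\<^sub>m k"
    unfolding K_def using schur_complement_right_inverse[OF c c' _ ai(1,3)]
      schur_complement_left_inverse[OF c c' _ ai(1,2)] TSi SiT Si_eq by auto
  have "K * \<xi> x = \<eta> x * K" if x: "x \<in> S" for x
  proof -
    have rx: "\<rho> x \<in> carrier_mat d d" and cx: "\<xi> x \<in> carrier_mat k k" and ex: "\<eta> x \<in> carrier_mat k k"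
      using is_rep_carrier[OF ra x] is_rep_carrier[OF rX x] is_rep_carrier[OF rY x] by auto
    from four_block_mat_intertwines_block_diag[OF c rx cx rx ex int[rule_format, OF x]]
    show ?thesis unfolding K_def by (intro schur_complement_intertwines[OF c rx cx ex ai]) auto
  qed
  then show ?thesis unfolding rep_equiv_Pair_iff using rX rY K c'(4) K_inv by blast
qed

lemma dsum2_cancel_if_zero_corner:
  fixes \<beta> \<gamma> \<delta> T Si :: "complex mat"
  assumes rX: "is_rep br S (k,\<xi>)" and rY: "is_rep br S (k,\<eta>)" and ra: "is_rep br S (d,\<rho>)"
    and c: "\<beta> \<in> carrier_mat d k" "\<gamma> \<in> carrier_mat k d" "\<delta> \<in> carrier_mat k k"
    and T: "T = four_block_mat (0\<^sub>m d d) \<beta> \<gamma> \<delta>"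
    and Si: "Si \<in> carrier_mat (d + k) (d + k)" and TSi: "T * Si = 1\<^sub>m (d + k)" and SiT: "Si * T = 1\<^sub>m (d + k)"
    and int: "\<forall>x\<in>S. T * block_diag d k d k (\<rho> x) (\<xi> x) = block_diag d k d k (\<rho> x) (\<eta> x) * T"
  shows "rep_equiv br S (k,\<xi>) (k,\<eta>)"
proof -
  obtain \<alpha>' \<beta>' \<gamma>' \<delta>' where sb: "split_block Si d d = (\<alpha>',\<beta>',\<gamma>',\<delta>')" by (metis prod_cases4)
  note sp = split_block[OF sb, of k k]
  have c': "\<alpha>' \<in> carrier_mat d d" "\<beta>' \<in> carrier_mat d k" "\<gamma>' \<in> carrier_mat k d" "\<delta>' \<in> carrier_mat k k"
    and Si_eq: "Si = four_block_mat \<alpha>' \<beta>' \<gamma>' \<delta>'" using sp Si by auto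
  have c0: "0\<^sub>m d d \<in> carrier_mat d d" by simp
  have T_carrier: "T \<in> carrier_mat (d + k) (d + k)" using T c by auto
  let ?X = "\<lambda>x. block_diag d k d k (\<rho> x) (\<xi> x)" and ?Y = "\<lambda>x. block_diag d k d k (\<rho> x) (\<eta> x)"
  have carriers: "\<rho> x \<in> carrier_mat d d" "\<xi> x \<in> carrier_mat k k" "\<eta> x \<in> carrier_mat k k" if "x \<in> S" for x
    using is_rep_carrier[OF ra that] is_rep_carrier[OF rX that] is_rep_carrier[OF rY that] by auto
  have \<beta>'_int: "\<beta>' * \<eta> x = \<rho> x * \<beta>'" if x: "x \<in> S" for x
  proof -
    have "Si * ?Y x = ?X x * Si"
      using inverse_mat_intertwines[OF T_carrier Si _ _ TSi SiT] int x carriers[OF x] by auto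
    with four_block_mat_intertwines_block_diag[OF c'] carriers[OF x] Si_eq show ?thesis by blast
  qed
  \<comment> \<open>Since \<open>\<beta>' \<gamma> = 1\<close>, the unipotent \<open>U\<close> built from \<open>\<beta>'\<close> moves \<open>T\<close> to one with corner \<open>1\<close>.\<close>
  have "\<alpha>' * 0\<^sub>m d d + \<beta>' * \<gamma> = 1\<^sub>m d"
    using four_block_mat_mult_eq_one[OF c' c0 c] SiT T Si_eq by auto
  then have \<beta>'\<gamma>: "\<beta>' * \<gamma> = 1\<^sub>m d" using c c' by simp
  define U where "U = four_block_mat (1\<^sub>m d) \<beta>' (0\<^sub>m k d) (1\<^sub>m k)"
  define Ui where "Ui = four_block_mat (1\<^sub>m d) (- \<beta>') (0\<^sub>m k d) (1\<^sub>m k)"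
  have U: "U \<in> carrier_mat (d + k) (d + k)" and Ui: "Ui \<in> carrier_mat (d + k) (d + k)"
    unfolding U_def Ui_def by auto
  have UUi: "U * Ui = 1\<^sub>m (d + k)" and UiU: "Ui * U = 1\<^sub>m (d + k)"
    unfolding U_def Ui_def using unipotent_block_mat_mult[OF c'(2)]
      unipotent_block_mat_mult[OF uminus_carrier_mat[OF c'(2)]] by auto
  have UT: "U * T = four_block_mat (1\<^sub>m d) (\<beta> + \<beta>' * \<delta>) \<gamma> \<delta>"
  proof -
    have "U * T = four_block_mat (1\<^sub>m d * 0\<^sub>m d d + \<beta>' * \<gamma>) (1\<^sub>m d * \<beta> + \<beta>' * \<delta>)
        (0\<^sub>m k d * 0\<^sub>m d d + 1\<^sub>m k * \<gamma>) (0\<^sub>m k d * \<beta> + 1\<^sub>m k * \<delta>)"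
      unfolding U_def T by (rule mult_four_block_mat) (use c c' in auto)
    also have "\<dots> = four_block_mat (1\<^sub>m d) (\<beta> + \<beta>' * \<delta>) \<gamma> \<delta>"
      using c c' \<beta>'\<gamma> by (intro cong_four_block_mat) auto
    finally show ?thesis .
  qed
  have "(U * T) * (Si * Ui) = 1\<^sub>m (d + k)" "(Si * Ui) * (U * T) = 1\<^sub>m (d + k)"
    using mult_inverse_mat[OF T_carrier Si U Ui TSi SiT UUi UiU] by auto
  moreover have "\<forall>x\<in>S. (U * T) * ?X x = ?Y x * (U * T)"
  proof
    fix x assume x: "x \<in> S"
    have cX: "?X x \<in> carrier_mat (d + k) (d + k)" and cY: "?Y x \<in> carrier_mat (d + k) (d + k)"
      using carriers[OF x] by auto
    have "U * ?Y x = ?Y x * U"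
      unfolding U_def by (rule unipotent_block_mat_commute[OF c'(2) carriers(1,3)[OF x] \<beta>'_int[OF x]])
    from mult_intertwines[OF T_carrier U cX cY cY int[rule_format, OF x] this]
    show "(U * T) * ?X x = ?Y x * (U * T)" .
  qed
  moreover have "1\<^sub>m d * 1\<^sub>m d = (1\<^sub>m d :: complex mat)" by simp
  ultimately show ?thesis
    using dsum2_cancel_if_invertible_corner[OF rX rY ra _ _ c(2,3), of "1\<^sub>m d" "\<beta> + \<beta>' * \<delta>" "Si * Ui"]
      c c' Si Ui unfolding UT by auto
qed

lemma dsum2_cancel_irreducible:
  assumes ia: "irreducible_rep br S (d,\<rho>)" and rX: "is_rep br S (k,\<xi>)" and rY: "is_rep br S (l,\<eta>)"
    and eqv: "rep_equiv br S (dsum2 (d,\<rho>) (k,\<xi>)) (dsum2 (d,\<rho>) (l,\<eta>))"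
  shows "rep_equiv br S (k,\<xi>) (l,\<eta>)"
proof -
  have ra: "is_rep br S (d,\<rho>)" using ia by (rule irreducible_rep_is_rep)
  from eqv[unfolded dsum2_Pair rep_equiv_Pair_iff] obtain T Si where
    kl: "d + k = d + l" and T: "T \<in> carrier_mat (d+k) (d+k)" and Si: "Si \<in> carrier_mat (d+k) (d+k)"
    and TSi: "T * Si = 1\<^sub>m (d+k)" and SiT: "Si * T = 1\<^sub>m (d+k)"
    and int0: "\<forall>x\<in>S. T * block_diag d k d k (\<rho> x) (\<xi> x) = block_diag d l d l (\<rho> x) (\<eta> x) * T" by blast
  from kl have lk: "l = k" by simp
  note int = int0[unfolded lk] and rY = rY[unfolded lk]
  obtain \<alpha> \<beta> \<gamma> \<delta> where sb: "split_block T d d = (\<alpha>,\<beta>,\<gamma>,\<delta>)" by (metis prod_cases4)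
  note sp = split_block[OF sb, of k k]
  have c: "\<alpha> \<in> carrier_mat d d" "\<beta> \<in> carrier_mat d k" "\<gamma> \<in> carrier_mat k d" "\<delta> \<in> carrier_mat k k"
    and T_eq: "T = four_block_mat \<alpha> \<beta> \<gamma> \<delta>" using sp T by auto
  have \<alpha>_int: "\<forall>x\<in>S. \<alpha> * \<rho> x = \<rho> x * \<alpha>"
    using four_block_mat_intertwines_block_diag[OF c] is_rep_carrier[OF ra] is_rep_carrier[OF rX]
      is_rep_carrier[OF rY] int T_eq by blast
  show ?thesis unfolding lk
  proof (cases "\<alpha> = 0\<^sub>m d d")
    case False
    have "\<forall>v\<in>carrier_vec d. \<alpha> *\<^sub>v v = 0\<^sub>v d \<longrightarrow> v = 0\<^sub>v d"
      using intertwiner_from_irreducible_inj[OF ia ra c(1) \<alpha>_int False] by blast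
    from inj_square_mat_invertible[OF c(1) this] obtain \<alpha>i
      where "\<alpha>i \<in> carrier_mat d d" "\<alpha> * \<alpha>i = 1\<^sub>m d" "\<alpha>i * \<alpha> = 1\<^sub>m d" by blast
    then show "rep_equiv br S (k, \<xi>) (k, \<eta>)"
      using dsum2_cancel_if_invertible_corner[OF rX rY ra c Si] TSi SiT int T_eq by auto
  next
    case True
    then show "rep_equiv br S (k, \<xi>) (k, \<eta>)"
      using dsum2_cancel_if_zero_corner[OF rX rY ra c(2-4) _ Si TSi SiT int] T_eq by auto
  qed
qed

lemma intertwiner_from_dsum2_summand:
  assumes ia: "irreducible_rep br S (d,\<rho>)" and rX: "is_rep br S (k,\<xi>)" and rB: "is_rep br S (D,\<sigma>)"
    and eqv: "rep_equiv br S (dsum2 (d,\<rho>) (k,\<xi>)) (D,\<sigma>)"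
  shows "\<exists>C\<in>carrier_mat D d. C \<noteq> 0\<^sub>m D d \<and> (\<forall>x\<in>S. C * \<rho> x = \<sigma> x * C)"
proof -
  have ra: "is_rep br S (d,\<rho>)" using ia by (rule irreducible_rep_is_rep)
  have dpos: "d > 0" using irreducible_rep_dim_pos[OF ia] by simp
  from eqv[unfolded dsum2_Pair rep_equiv_Pair_iff] obtain T Si where
    D: "d + k = D" and T: "T \<in> carrier_mat (d+k) (d+k)" and Si: "Si \<in> carrier_mat (d+k) (d+k)"
    and TSi: "T * Si = 1\<^sub>m (d+k)" and SiT: "Si * T = 1\<^sub>m (d+k)"
    and int: "\<forall>x\<in>S. T * block_diag d k d k (\<rho> x) (\<xi> x) = \<sigma> x * T" by blast
  define E where "E = four_block_mat (1\<^sub>m d) (0\<^sub>m d 0) (0\<^sub>m k d) (0\<^sub>m k 0 :: complex mat)"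
  have E: "E \<in> carrier_mat (d+k) d" unfolding E_def
    using four_block_carrier_mat[of "1\<^sub>m d :: complex mat" d d "0\<^sub>m k 0 :: complex mat" k 0] by simp
  have Enz: "E \<noteq> 0\<^sub>m (d+k) d"
  proof
    assume "E = 0\<^sub>m (d+k) d"
    then have "E $$ (0,0) = 0" using dpos by simp
    moreover have "E $$ (0,0) = 1" unfolding E_def using dpos by simp
    ultimately show False by simp
  qed
  have EX: "block_diag d k d k (\<rho> x) (\<xi> x) * E = E * \<rho> x" if x: "x \<in> S" for x
    unfolding E_def by (rule block_diag_mult_first_inclusion[OF is_rep_carrier[OF ra x] is_rep_carrier[OF rX x]])
  define C where "C = T * E"
  have C: "C \<in> carrier_mat D d" unfolding C_def using T E D by auto
  have "C \<noteq> 0\<^sub>m D d"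
  proof
    assume "C = 0\<^sub>m D d"
    then have "Si * C = 0\<^sub>m (d+k) d" using Si D by simp
    moreover have "Si * C = E" unfolding C_def using Si T E SiT
      by (simp add: assoc_mult_mat[of Si "d+k" "d+k" T "d+k" E d, symmetric])
    ultimately show False using Enz by simp
  qed
  moreover have "\<forall>x\<in>S. C * \<rho> x = \<sigma> x * C"
  proof
    fix x assume x: "x \<in> S"
    have rx: "\<rho> x \<in> carrier_mat d d" and cx: "\<xi> x \<in> carrier_mat k k" and sx: "\<sigma> x \<in> carrier_mat D D"
      using is_rep_carrier[OF ra x] is_rep_carrier[OF rX x] is_rep_carrier[OF rB x] by auto
    have bx: "block_diag d k d k (\<rho> x) (\<xi> x) \<in> carrier_mat (d+k) (d+k)" using rx cx by auto
    have "C * \<rho> x = T * (E * \<rho> x)" unfolding C_def using T E rx by simp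
    also have "\<dots> = T * (block_diag d k d k (\<rho> x) (\<xi> x) * E)" using EX[OF x] by simp
    also have "\<dots> = (T * block_diag d k d k (\<rho> x) (\<xi> x)) * E" using T E bx by simp
    also have "\<dots> = (\<sigma> x * T) * E" using int x by simp
    also have "\<dots> = \<sigma> x * C" unfolding C_def using T E sx D by simp
    finally show "C * \<rho> x = \<sigma> x * C" .
  qed
  ultimately show ?thesis using C by blast
qed

lemma intertwiner_into_dsum_list_equiv_summand:
  assumes ia: "irreducible_rep br S (d,\<rho>)" and irrB: "\<forall>r\<in>set Bs. irreducible_rep br S r"
    and C: "C \<in> carrier_mat (fst (dsum_list Bs)) d" and nz: "C \<noteq> 0\<^sub>m (fst (dsum_list Bs)) d"
    and int: "\<forall>x\<in>S. C * \<rho> x = snd (dsum_list Bs) x * C"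
  shows "\<exists>b\<in>set Bs. rep_equiv br S (d,\<rho>) b"
  using irrB C nz int
proof (induction Bs arbitrary: C)
  case Nil
  then have "C \<in> carrier_mat 0 d" by (simp add: dsum_list_simps zero_rep_def)
  then have "C = 0\<^sub>m 0 d" by (intro eq_matI, auto)
  then show ?case using Nil by (simp add: dsum_list_simps zero_rep_def)
next
  case (Cons b Bs)
  obtain e \<sigma> where b: "b = (e,\<sigma>)" by fastforce
  obtain k \<tau> where L: "dsum_list Bs = (k,\<tau>)" by fastforce
  have ib: "irreducible_rep br S (e,\<sigma>)" using Cons.prems b by auto
  have irrBs: "\<forall>r\<in>set Bs. irreducible_rep br S r" using Cons.prems by auto
  have ra: "is_rep br S (d,\<rho>)" and rb: "is_rep br S (e,\<sigma>)"
    using ia ib by (auto intro: irreducible_rep_is_rep)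
  have rL: "is_rep br S (k,\<tau>)" using is_rep_dsum_list[of Bs br S] irrBs L by (auto simp: irreducible_rep_def)
  have DL: "dsum_list (b # Bs) = (e + k, \<lambda>x. block_diag e k e k (\<sigma> x) (\<tau> x))"
    unfolding dsum_list_simps b L dsum2_Pair by simp
  have C: "C \<in> carrier_mat (e + k) (d + 0)" using Cons.prems(2) DL by simp
  have nz: "C \<noteq> 0\<^sub>m (e + k) (d + 0)" using Cons.prems(3) DL by simp
  obtain \<alpha> \<beta> \<gamma> \<delta> where sb: "split_block C e d = (\<alpha>,\<beta>,\<gamma>,\<delta>)" by (metis prod_cases4)
  note sp = split_block[OF sb, of k 0] 
  have al: "\<alpha> \<in> carrier_mat e d" and be: "\<beta> \<in> carrier_mat e 0" and ga: "\<gamma> \<in> carrier_mat k d"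
    and de: "\<delta> \<in> carrier_mat k 0" and Ceq: "C = four_block_mat \<alpha> \<beta> \<gamma> \<delta>" using sp C by auto
  have be0: "\<beta> = 0\<^sub>m e 0" and de0: "\<delta> = 0\<^sub>m k 0" using be de by (auto intro: carrier_mat_no_cols_eq_zero)
  have ints: "\<alpha> * \<rho> x = \<sigma> x * \<alpha> \<and> \<gamma> * \<rho> x = \<tau> x * \<gamma>" if x: "x \<in> S" for x
  proof -
    have rx: "\<rho> x \<in> carrier_mat d d" and sx: "\<sigma> x \<in> carrier_mat e e" and tx: "\<tau> x \<in> carrier_mat k k"
      using is_rep_carrier[OF ra x] is_rep_carrier[OF rb x] is_rep_carrier[OF rL x] by auto
    have "block_diag d 0 d 0 (\<rho> x) (0\<^sub>m 0 0) = \<rho> x" using rx by (intro eq_matI) auto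
    then have "C * block_diag d 0 d 0 (\<rho> x) (0\<^sub>m 0 0) = block_diag e k e k (\<sigma> x) (\<tau> x) * C"
      using Cons.prems(4) x DL by simp
    from four_block_mat_intertwines_block_diag[OF al be ga de rx zero_carrier_mat sx tx this[unfolded Ceq]]
    show ?thesis by simp
  qed
  show ?case
  proof (cases "\<alpha> = 0\<^sub>m e d")
    case False
    have "rep_equiv br S (d,\<rho>) (e,\<sigma>)" using schur_rep_equiv[OF ia ib al _ False] ints by auto
    then show ?thesis using b by auto
  next
    case True
    have "\<gamma> \<noteq> 0\<^sub>m k d"
    proof
      assume "\<gamma> = 0\<^sub>m k d"
      then have "C = 0\<^sub>m (e + k) (d + 0)" unfolding Ceq be0 de0 True by simp
      then show False using nz by simp
    qed
    then have "\<exists>b\<in>set Bs. rep_equiv br S (d,\<rho>) b"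
      using Cons.IH[OF irrBs, of \<gamma>] ga ints L by auto
    then show ?thesis by auto
  qed
qed

lemma irreducible_summand_equiv_member:
  assumes ia: "irreducible_rep br S (d,\<rho>)" and rX: "is_rep br S (k,\<xi>)"
    and irrB: "\<forall>r\<in>set Bs. irreducible_rep br S r"
    and eqv: "rep_equiv br S (dsum2 (d,\<rho>) (k,\<xi>)) (dsum_list Bs)"
  shows "\<exists>b\<in>set Bs. rep_equiv br S (d,\<rho>) b"
proof -
  obtain D \<sigma> where LB: "dsum_list Bs = (D,\<sigma>)" by fastforce
  have "is_rep br S (D,\<sigma>)" using is_rep_dsum_list[of Bs br S] irrB LB by (auto simp: irreducible_rep_def)
  from intertwiner_from_dsum2_summand[OF ia rX this eqv[unfolded LB]] obtain C
    where "C \<in> carrier_mat D d" "C \<noteq> 0\<^sub>m D d" "\<forall>x\<in>S. C * \<rho> x = \<sigma> x * C" by blast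
  then show ?thesis by (intro intertwiner_into_dsum_list_equiv_summand[OF ia irrB, of C]) (use LB in auto)
qed

lemma dsum_list_irreducible_unique:
  assumes irr: "\<forall>j<q. irreducible_rep br S (\<psi>s j)"
    and ineq: "\<forall>j<q. \<forall>l<q. j \<noteq> l \<longrightarrow> \<not> rep_equiv br S (\<psi>s j) (\<psi>s l)"
    and A: "\<forall>j\<in>set A. j < q" and B: "\<forall>j\<in>set B. j < q"
    and eqv: "rep_equiv br S (dsum_list (map \<psi>s A)) (dsum_list (map \<psi>s B))"
  shows "mset A = mset B"
  using A B eqv
proof (induction A arbitrary: B)
  case Nil
  have "fst (dsum_list (map \<psi>s B)) = 0"
    using rep_equiv_dim_eq[OF Nil.prems(3)] by (simp add: dsum_list_simps zero_rep_def)
  then have "sum_list (map (fst \<circ> \<psi>s) B) = 0" by (simp add: dim_dsum_list)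
  moreover have "\<forall>j\<in>set B. fst (\<psi>s j) > 0" using Nil.prems(2) irr irreducible_rep_dim_pos by blast
  ultimately have "B = []" by (cases B, auto)
  then show ?case by simp
next
  case (Cons j A)
  have jq: "j < q" and Aq: "\<forall>j\<in>set A. j < q" using Cons.prems by auto
  have rep: "\<forall>r\<in>set (map \<psi>s C). is_rep br S r" if "\<forall>j\<in>set C. j < q" for C
    using irr that by (auto simp: irreducible_rep_def)
  obtain d \<rho> where pj: "\<psi>s j = (d,\<rho>)" by fastforce
  obtain k \<xi> where LA: "dsum_list (map \<psi>s A) = (k,\<xi>)" by fastforce
  have ia: "irreducible_rep br S (d,\<rho>)" using irr jq pj by metis
  have rX: "is_rep br S (k,\<xi>)" using is_rep_dsum_list[OF rep[OF Aq]] LA by simp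
  have eqv: "rep_equiv br S (dsum2 (d,\<rho>) (k,\<xi>)) (dsum_list (map \<psi>s B))"
    using Cons.prems(3) pj LA by (simp add: dsum_list_simps)
  have "\<forall>r\<in>set (map \<psi>s B). irreducible_rep br S r" using irr Cons.prems(2) by auto
  from irreducible_summand_equiv_member[OF ia rX this eqv] obtain j'
    where j': "j' \<in> set B" "rep_equiv br S (\<psi>s j) (\<psi>s j')" using pj by auto
  then have "j' = j" using ineq jq Cons.prems(2) by metis
  with j' have jB: "j \<in> set B" by simp
  define B' where "B' = remove1 j B"
  have mB: "mset B = mset (j # B')" unfolding B'_def using jB by simp
  have B'q: "\<forall>j\<in>set B'. j < q" unfolding B'_def using Cons.prems(2) by (meson notin_set_remove1)
  obtain l \<eta> where LB': "dsum_list (map \<psi>s B') = (l,\<eta>)" by fastforce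
  have rY: "is_rep br S (l,\<eta>)" using is_rep_dsum_list[OF rep[OF B'q]] LB' by simp
  have "rep_equiv br S (dsum_list (map \<psi>s B)) (dsum_list (map \<psi>s (j # B')))"
    by (rule dsum_list_perm) (use mB rep[OF Cons.prems(2)] in auto)
  then have "rep_equiv br S (dsum2 (d,\<rho>) (k,\<xi>)) (dsum2 (d,\<rho>) (l,\<eta>))"
    using rep_equiv_trans[OF eqv] LB' pj by (simp add: dsum_list_simps)
  from dsum2_cancel_irreducible[OF ia rX rY this]
  have "rep_equiv br S (dsum_list (map \<psi>s A)) (dsum_list (map \<psi>s B'))" using LA LB' by simp
  from Cons.IH[OF Aq B'q this] show ?case using mB by simp
qed

section \<open>Multiplicities\<close>

definition mult_list :: "(nat \<Rightarrow> nat) \<Rightarrow> nat \<Rightarrow> nat list" where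
  "mult_list f q = concat (map (\<lambda>j. replicate (f j) j) [0..<q])"

lemma multi_sum_eq_dsum_list: "multi_sum \<phi>s m p = dsum_list (map \<phi>s (mult_list m p))"
  unfolding multi_sum_def mult_list_def by (simp add: map_concat comp_def)

lemma mult_list_less: "\<forall>j\<in>set (mult_list f q). j < q"
  unfolding mult_list_def by auto

lemma count_mset_concat: "count (mset (concat xss)) a = sum_list (map (\<lambda>xs. count (mset xs) a) xss)"
  by (induction xss) auto

lemma count_mult_list: "count (mset (mult_list f q)) j = (if j < q then f j else 0)"
proof -
  have "count (mset (mult_list f q)) j = sum_list (map (\<lambda>l. count (mset (replicate (f l) l)) j) [0..<q])"
    unfolding mult_list_def by (simp add: count_mset_concat comp_def)
  also have "\<dots> = (\<Sum>l<q. if l = j then f l else 0)"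
    by (simp add: sum_list_map_eq_sum_count2[symmetric] atLeast0LessThan[symmetric]
        sum_set_upt_conv_sum_list_nat[symmetric])
  also have "\<dots> = (if j < q then f j else 0)" by (simp add: sum.delta)
  finally show ?thesis .
qed

lemma sum_list_map_mult_list: "sum_list (map g (mult_list f p)) = (\<Sum>i<p. f i * g i)"
  by (induction p) (auto simp: mult_list_def sum_list_replicate)

lemma mult_list_cong: "(\<forall>j<q. f j = g j) \<Longrightarrow> mult_list f q = mult_list g q"
  unfolding mult_list_def by (auto intro!: arg_cong[where f = concat] map_cong)

lemma dim_multi_sum: "fst (multi_sum \<psi>s f q) = (\<Sum>j<q. f j * fst (\<psi>s j))"
  unfolding multi_sum_eq_dsum_list dim_dsum_list map_map by (simp add: sum_list_map_mult_list)

lemma multi_sum_equiv_iff: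
  assumes irr: "\<forall>j<q. irreducible_rep br S (\<psi>s j)"
    and ineq: "\<forall>j<q. \<forall>l<q. j \<noteq> l \<longrightarrow> \<not> rep_equiv br S (\<psi>s j) (\<psi>s l)"
  shows "rep_equiv br S (multi_sum \<psi>s f q) (multi_sum \<psi>s g q) \<longleftrightarrow> (\<forall>j<q. f j = g j)"
proof
  assume "rep_equiv br S (multi_sum \<psi>s f q) (multi_sum \<psi>s g q)"
  then have "mset (mult_list f q) = mset (mult_list g q)"
    unfolding multi_sum_eq_dsum_list
    by (rule dsum_list_irreducible_unique[OF irr ineq mult_list_less mult_list_less])
  then show "\<forall>j<q. f j = g j" by (metis count_mult_list)
next
  assume "\<forall>j<q. f j = g j"
  moreover have "is_rep br S (multi_sum \<psi>s f q)"
    unfolding multi_sum_eq_dsum_list using irr mult_list_less[of f q]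
    by (auto intro!: is_rep_dsum_list simp: irreducible_rep_def)
  ultimately show "rep_equiv br S (multi_sum \<psi>s f q) (multi_sum \<psi>s g q)"
    unfolding multi_sum_eq_dsum_list by (metis mult_list_cong rep_equiv_refl)
qed

lemma rep_equiv_iff_multiplicities_eq:
  assumes irr: "\<forall>j<q. irreducible_rep br S (\<psi>s j)"
    and ineq: "\<forall>j<q. \<forall>l<q. j \<noteq> l \<longrightarrow> \<not> rep_equiv br S (\<psi>s j) (\<psi>s l)"
    and r: "rep_equiv br S r (multi_sum \<psi>s f q)" and s: "rep_equiv br S s (multi_sum \<psi>s g q)"
  shows "rep_equiv br S r s \<longleftrightarrow> (\<forall>j<q. f j = g j)"
proof -
  have "rep_equiv br S r s \<longleftrightarrow> rep_equiv br S (multi_sum \<psi>s f q) (multi_sum \<psi>s g q)"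
  proof
    assume "rep_equiv br S r s"
    from rep_equiv_trans[OF rep_equiv_trans[OF rep_equiv_sym[OF r] this] s]
    show "rep_equiv br S (multi_sum \<psi>s f q) (multi_sum \<psi>s g q)" .
  next
    assume "rep_equiv br S (multi_sum \<psi>s f q) (multi_sum \<psi>s g q)"
    from rep_equiv_trans[OF rep_equiv_trans[OF r this] rep_equiv_sym[OF s]]
    show "rep_equiv br S r s" .
  qed
  then show ?thesis using multi_sum_equiv_iff[OF irr ineq] by simp
qed

lemma multiplicities_sum_pos:
  assumes "rep_equiv br S r (multi_sum \<psi>s f q)" and "fst r > 0"
  shows "(\<Sum>j<q. f j) \<ge> 1"
proof -
  have "0 < fst r" by fact
  also have "fst r = (\<Sum>j<q. f j * fst (\<psi>s j))"
    using rep_equiv_dim_eq[OF assms(1)] by (simp add: dim_multi_sum)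
  finally have "(\<Sum>j<q. f j * fst (\<psi>s j)) \<noteq> 0" by (rule gr_implies_not0)
  then obtain j where "j \<in> {..<q}" "f j * fst (\<psi>s j) \<noteq> 0"
    by (rule sum.not_neutral_contains_not_neutral)
  then show ?thesis using member_le_sum[of j "{..<q}" f] by simp
qed

lemma multi_sum_branching:
  assumes rep: "\<forall>j<q. is_rep br S (\<psi>s j)"
    and dec: "\<forall>i<p. rep_equiv br S (\<phi>s i) (multi_sum \<psi>s (\<lambda>j. nn j i) q)"
  shows "rep_equiv br S (multi_sum \<phi>s m p) (multi_sum \<psi>s (\<lambda>j. \<Sum>i<p. m i * nn j i) q)"
proof -
  define L where "L i = mult_list (\<lambda>j. nn j i) q" for i
  have "rep_equiv br S (multi_sum \<phi>s m p) (dsum_list (map \<psi>s (concat (map L (mult_list m p)))))"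
    unfolding multi_sum_eq_dsum_list
    by (rule dsum_list_concat_equiv)
      (use dec rep mult_list_less[of m p] mult_list_less[of "\<lambda>j. nn j _" q] in
        \<open>auto simp: L_def multi_sum_eq_dsum_list\<close>)
  also have "rep_equiv br S \<dots> (dsum_list (map \<psi>s (mult_list (\<lambda>j. \<Sum>i<p. m i * nn j i) q)))"
  proof (rule dsum_list_perm)
    have "count (mset (concat (map L (mult_list m p)))) j
        = count (mset (mult_list (\<lambda>j. \<Sum>i<p. m i * nn j i) q)) j" for j
    proof -
      have "count (mset (concat (map L (mult_list m p)))) j
          = sum_list (map (\<lambda>i. count (mset (L i)) j) (mult_list m p))"
        by (simp only: count_mset_concat map_map comp_def)
      also have "\<dots> = (\<Sum>i<p. m i * count (mset (L i)) j)" by (rule sum_list_map_mult_list)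
      also have "\<dots> = count (mset (mult_list (\<lambda>j. \<Sum>i<p. m i * nn j i) q)) j"
        unfolding L_def count_mult_list by (cases "j < q") simp_all
      finally show ?thesis .
    qed
    then show "mset (map \<psi>s (concat (map L (mult_list m p))))
        = mset (map \<psi>s (mult_list (\<lambda>j. \<Sum>i<p. m i * nn j i) q))"
      by (metis multiset_eqI mset_map)
    show "\<forall>r\<in>set (map \<psi>s (concat (map L (mult_list m p)))). is_rep br S r"
      using rep mult_list_less[of "\<lambda>j. nn j _" q] by (auto simp: L_def)
  qed
  finally show ?thesis unfolding multi_sum_eq_dsum_list .
qed

section \<open>Counting with the branching matrix\<close>

lemma sum_eq_1_nat_imp_delta:
  fixes f :: "nat \<Rightarrow> nat"
  assumes "(\<Sum>l<q. f l) = 1"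
  obtains j where "j < q" "\<forall>l<q. f l = (if l = j then 1 else 0)"
proof -
  obtain j where j: "j < q" "f j \<noteq> 0"
    using assms by (metis lessThan_iff sum.neutral zero_neq_one)
  have "f j + (\<Sum>l\<in>{..<q} - {j}. f l) = 1"
    using assms sum.remove[of "{..<q}" j f] j by simp
  then have "f j = 1" and "(\<Sum>l\<in>{..<q} - {j}. f l) = 0" using j(2) by arith+
  then show ?thesis using that j by (metis Diff_iff finite_Diff finite_lessThan lessThan_iff
      singletonD sum_eq_0_iff)
qed

lemma sum_mult_delta_nat:
  fixes f g :: "nat \<Rightarrow> nat"
  assumes "(\<Sum>l<q. f l) = 1" "(\<Sum>l<q. g l) = 1"
  shows "(\<Sum>l<q. f l * g l) = (if \<forall>l<q. f l = g l then 1 else 0)"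
proof -
  obtain a where a: "a < q" "\<forall>l<q. f l = (if l = a then 1 else 0)"
    using sum_eq_1_nat_imp_delta[OF assms(1)] by blast
  obtain b where b: "b < q" "\<forall>l<q. g l = (if l = b then 1 else 0)"
    using sum_eq_1_nat_imp_delta[OF assms(2)] by blast
  have "(\<Sum>l<q. f l * g l) = (\<Sum>l<q. if l = a \<and> l = b then 1 else 0)"
    using a b by (intro sum.cong) auto
  also have "\<dots> = (if a = b then 1 else 0)" using a by (auto simp: sum.delta)
  also have "a = b \<longleftrightarrow> (\<forall>l<q. f l = g l)" using a b by (metis zero_neq_one)
  finally show ?thesis .
qed

lemma sum_squares_eq_1_nat_iff:
  fixes f :: "nat \<Rightarrow> nat"
  assumes "(\<Sum>l<q. f l) \<ge> 1"
  shows "(\<Sum>l<q. f l * f l) = 1 \<longleftrightarrow> (\<Sum>l<q. f l) = 1"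
proof
  assume "(\<Sum>l<q. f l * f l) = 1"
  moreover have "(\<Sum>l<q. f l) \<le> (\<Sum>l<q. f l * f l)" by (rule sum_mono) (simp add: le_square)
  ultimately show "(\<Sum>l<q. f l) = 1" using assms by linarith
qed (simp add: sum_mult_delta_nat)

lemma sum_mono_eq_iff:
  fixes f g :: "'a \<Rightarrow> nat"
  assumes "finite A" "\<And>x. x \<in> A \<Longrightarrow> f x \<le> g x"
  shows "sum f A = sum g A \<longleftrightarrow> (\<forall>x\<in>A. f x = g x)"
  using sum_mono_inv[of f A g] assms by (auto intro: sum.cong)

lemma branching_sum_eq_iff:
  fixes m :: "nat \<Rightarrow> nat" and nn :: "nat \<Rightarrow> nat \<Rightarrow> nat"
  assumes pos: "\<forall>i<p. (\<Sum>j<q. nn j i) \<ge> 1"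
  shows "(\<Sum>j<q. \<Sum>i<p. m i * nn j i) = (\<Sum>i<p. m i) \<longleftrightarrow> (\<forall>i<p. m i \<noteq> 0 \<longrightarrow> (\<Sum>j<q. nn j i) = 1)"
proof -
  define c where "c i = (\<Sum>j<q. nn j i)" for i
  have "(\<Sum>j<q. \<Sum>i<p. m i * nn j i) = (\<Sum>i<p. m i * c i)"
    unfolding c_def by (simp add: sum.swap[of _ "{..<q}"] sum_distrib_left)
  then have "(\<Sum>j<q. \<Sum>i<p. m i * nn j i) = (\<Sum>i<p. m i) \<longleftrightarrow> (\<Sum>i<p. m i) = (\<Sum>i<p. m i * c i)"
    by linarith
  also have "\<dots> \<longleftrightarrow> (\<forall>i\<in>{..<p}. m i = m i * c i)"
    by (rule sum_mono_eq_iff) (use pos in \<open>auto simp: c_def\<close>)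
  also have "\<dots> \<longleftrightarrow> (\<forall>i<p. m i \<noteq> 0 \<longrightarrow> c i = 1)"
  proof -
    have "m i = m i * c i \<longleftrightarrow> (m i \<noteq> 0 \<longrightarrow> c i = 1)" for i by auto
    then show ?thesis by (simp add: Ball_def)
  qed
  finally show ?thesis unfolding c_def .
qed

lemma sum_squares_expand:
  fixes m :: "nat \<Rightarrow> nat" and nn :: "nat \<Rightarrow> nat \<Rightarrow> nat"
  shows "(\<Sum>j<q. (\<Sum>i<p. m i * nn j i)^2) = (\<Sum>i<p. \<Sum>k<p. m i * m k * (\<Sum>j<q. nn j i * nn j k))"
proof -
  have "(\<Sum>j<q. (\<Sum>i<p. m i * nn j i)^2) = (\<Sum>j<q. \<Sum>i<p. \<Sum>k<p. m i * m k * (nn j i * nn j k))"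
    by (simp add: power2_eq_square sum_product algebra_simps)
  also have "\<dots> = (\<Sum>i<p. \<Sum>k<p. \<Sum>j<q. m i * m k * (nn j i * nn j k))"
    by (simp add: sum.swap[of _ "{..<q}"])
  finally show ?thesis by (simp add: sum_distrib_left)
qed

lemma branching_sum_squares_eq_iff_termwise:
  fixes m :: "nat \<Rightarrow> nat" and nn :: "nat \<Rightarrow> nat \<Rightarrow> nat"
  assumes pos: "\<forall>i<p. (\<Sum>j<q. nn j i) \<ge> 1"
  shows "(\<Sum>j<q. (\<Sum>i<p. m i * nn j i)^2) = (\<Sum>i<p. (m i)^2) \<longleftrightarrow>
    (\<forall>i<p. \<forall>k<p. (if i = k then m i * m k else 0) = m i * m k * (\<Sum>j<q. nn j i * nn j k))"
proof -
  define G where "G i k = (\<Sum>j<q. nn j i * nn j k)" for i k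
  define D where "D i k = (if i = k then m i * m k else 0)" for i k
  have D_le: "D i k \<le> m i * m k * G i k" if "i < p" for i k
  proof -
    have "1 \<le> (\<Sum>j<q. nn j i)" using pos that by simp
    also have "\<dots> \<le> G i i" unfolding G_def by (rule sum_mono) (simp add: le_square)
    finally show ?thesis by (cases "i = k") (simp_all add: D_def)
  qed
  have "(\<Sum>j<q. (\<Sum>i<p. m i * nn j i)^2) = (\<Sum>i<p. (m i)^2)
      \<longleftrightarrow> (\<Sum>i<p. \<Sum>k<p. D i k) = (\<Sum>i<p. \<Sum>k<p. m i * m k * G i k)"
    unfolding sum_squares_expand G_def D_def by (auto simp: power2_eq_square)
  also have "\<dots> \<longleftrightarrow> (\<forall>i\<in>{..<p}. (\<Sum>k<p. D i k) = (\<Sum>k<p. m i * m k * G i k))"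
    by (rule sum_mono_eq_iff) (auto intro!: sum_mono D_le)
  also have "\<dots> \<longleftrightarrow> (\<forall>i<p. \<forall>k<p. D i k = m i * m k * G i k)"
  proof -
    have "(\<Sum>k<p. D i k) = (\<Sum>k<p. m i * m k * G i k) \<longleftrightarrow> (\<forall>k\<in>{..<p}. D i k = m i * m k * G i k)"
      if "i < p" for i
      by (rule sum_mono_eq_iff) (use D_le that in auto)
    then show ?thesis by auto
  qed
  finally show ?thesis unfolding D_def G_def .
qed

lemma branching_sum_squares_eq_iff:
  fixes m :: "nat \<Rightarrow> nat" and nn :: "nat \<Rightarrow> nat \<Rightarrow> nat"
  assumes pos: "\<forall>i<p. (\<Sum>j<q. nn j i) \<ge> 1"
  shows "(\<Sum>j<q. (\<Sum>i<p. m i * nn j i)^2) = (\<Sum>i<p. (m i)^2) \<longleftrightarrow>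
    (\<forall>i<p. m i \<noteq> 0 \<longrightarrow> (\<Sum>j<q. nn j i) = 1) \<and>
    (\<forall>i<p. \<forall>k<p. i \<noteq> k \<and> m i \<noteq> 0 \<and> m k \<noteq> 0 \<longrightarrow> \<not> (\<forall>j<q. nn j i = nn j k))"
    (is "_ \<longleftrightarrow> ?unit \<and> ?distinct")
proof -
  define G where "G i k = (\<Sum>j<q. nn j i * nn j k)" for i k
  define D where "D i k = (if i = k then m i * m k else 0)" for i k
  have diag: "D i i = m i * m i * G i i \<longleftrightarrow> (m i \<noteq> 0 \<longrightarrow> (\<Sum>j<q. nn j i) = 1)" if "i < p" for i
    using sum_squares_eq_1_nat_iff[of "\<lambda>j. nn j i" q] pos that by (auto simp: D_def G_def)
  have off_diag: "D i k = m i * m k * G i k \<longleftrightarrow> (m i \<noteq> 0 \<and> m k \<noteq> 0 \<longrightarrow> \<not> (\<forall>j<q. nn j i = nn j k))"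
    if "i \<noteq> k" "m i \<noteq> 0 \<longrightarrow> (\<Sum>j<q. nn j i) = 1" "m k \<noteq> 0 \<longrightarrow> (\<Sum>j<q. nn j k) = 1" for i k
  proof (cases "m i \<noteq> 0 \<and> m k \<noteq> 0")
    case True
    then have "G i k = (if \<forall>j<q. nn j i = nn j k then 1 else 0)"
      unfolding G_def using that sum_mult_delta_nat[of "\<lambda>j. nn j i" q "\<lambda>j. nn j k"] by simp
    then show ?thesis using True that(1) by (simp add: D_def)
  qed (use that(1) in \<open>auto simp: D_def\<close>)
  have "(\<forall>i<p. \<forall>k<p. D i k = m i * m k * G i k) \<longleftrightarrow> ?unit \<and> ?distinct"
  proof
    assume all: "\<forall>i<p. \<forall>k<p. D i k = m i * m k * G i k"
    then have unit: ?unit using diag by simp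
    have ?distinct
    proof (intro allI impI)
      fix i k assume "i < p" "k < p" "i \<noteq> k \<and> m i \<noteq> 0 \<and> m k \<noteq> 0"
      then show "\<not> (\<forall>j<q. nn j i = nn j k)" using off_diag[of i k] all unit by simp
    qed
    with unit show "?unit \<and> ?distinct" ..
  next
    assume rhs: "?unit \<and> ?distinct"
    show "\<forall>i<p. \<forall>k<p. D i k = m i * m k * G i k"
    proof (intro allI impI)
      fix i k assume ik: "i < p" "k < p"
      show "D i k = m i * m k * G i k"
        using diag[of i] off_diag[of i k] rhs ik by (cases "i = k") simp_all
    qed
  qed
  then show ?thesis
    unfolding branching_sum_squares_eq_iff_termwise[OF pos] D_def G_def .
qed

theorem proposition2:
  fixes br :: "'g::euclidean_space \<Rightarrow> 'g \<Rightarrow> 'g"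
    and H :: "'g set"
    and \<phi> :: "'g rep" and \<phi>s :: "nat \<Rightarrow> 'g rep" and m :: "nat \<Rightarrow> nat" and p :: nat
    and \<psi>s :: "nat \<Rightarrow> 'g rep" and n :: "nat \<Rightarrow> nat" and nn :: "nat \<Rightarrow> nat \<Rightarrow> nat" and q :: nat
  assumes "compact_lie_algebra br"
    and "lie_subalgebra br H"
    and "is_rep br UNIV \<phi>"
    and "\<forall>i<p. irreducible_rep br UNIV (\<phi>s i)"
    and "\<forall>i<p. \<forall>k<p. i \<noteq> k \<longrightarrow> \<not> rep_equiv br UNIV (\<phi>s i) (\<phi>s k)"
    and "rep_equiv br UNIV \<phi> (multi_sum \<phi>s m p)"
    and "\<forall>j<q. irreducible_rep br H (\<psi>s j)"
    and "\<forall>j<q. \<forall>l<q. j \<noteq> l \<longrightarrow> \<not> rep_equiv br H (\<psi>s j) (\<psi>s l)"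
    and "rep_equiv br H \<phi> (multi_sum \<psi>s n q)"
    and "\<forall>i<p. rep_equiv br H (\<phi>s i) (multi_sum \<psi>s (\<lambda>j. nn j i) q)"
  shows "((\<forall>i<p. m i \<noteq> 0 \<longrightarrow> (\<Sum>j<q. nn j i) = 1) \<longleftrightarrow> (\<Sum>j<q. n j) = (\<Sum>i<p. m i))
       \<and> ((\<Sum>j<q. (n j)^2) = (\<Sum>i<p. (m i)^2) \<longrightarrow> (\<Sum>j<q. n j) = (\<Sum>i<p. m i))
       \<and> ((\<Sum>j<q. (n j)^2) = (\<Sum>i<p. (m i)^2) \<longleftrightarrow>
            ((\<Sum>j<q. n j) = (\<Sum>i<p. m i) \<and>
             (\<forall>i<p. \<forall>k<p. i \<noteq> k \<and> m i \<noteq> 0 \<and> m k \<noteq> 0 \<longrightarrow>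
                 \<not> rep_equiv br H (\<phi>s i) (\<phi>s k))))"
proof -
  \<comment> \<open>Compactness and the subalgebra property only ensure that the decompositions exist;
    these are hypotheses.\<close>
  note dec = assms(10)[rule_format]
  have \<psi>_rep: "\<forall>j<q. is_rep br H (\<psi>s j)" using assms(7) irreducible_rep_is_rep by blast
  have "rep_equiv br H (multi_sum \<psi>s n q) (multi_sum \<psi>s (\<lambda>j. \<Sum>i<p. m i * nn j i) q)"
    using rep_equiv_trans[OF rep_equiv_trans[OF rep_equiv_sym[OF assms(9)] rep_equiv_mono[OF subset_UNIV assms(6)]]
        multi_sum_branching[OF \<psi>_rep assms(10)]] .
  then have n: "\<forall>j<q. n j = (\<Sum>i<p. m i * nn j i)"
    by (rule multi_sum_equiv_iff[OF assms(7,8), THEN iffD1])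
  have pos: "\<forall>i<p. (\<Sum>j<q. nn j i) \<ge> 1"
    using multiplicities_sum_pos[OF dec irreducible_rep_dim_pos] assms(4) by blast
  have distinct: "(\<forall>i<p. \<forall>k<p. i \<noteq> k \<and> m i \<noteq> 0 \<and> m k \<noteq> 0 \<longrightarrow> \<not> rep_equiv br H (\<phi>s i) (\<phi>s k))
      \<longleftrightarrow> (\<forall>i<p. \<forall>k<p. i \<noteq> k \<and> m i \<noteq> 0 \<and> m k \<noteq> 0 \<longrightarrow> \<not> (\<forall>j<q. nn j i = nn j k))"
    by (simp add: rep_equiv_iff_multiplicities_eq[OF assms(7,8) dec dec])
  have sums: "(\<Sum>j<q. n j) = (\<Sum>j<q. \<Sum>i<p. m i * nn j i)"
    "(\<Sum>j<q. (n j)^2) = (\<Sum>j<q. (\<Sum>i<p. m i * nn j i)^2)" using n by simp_all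
  show ?thesis
    unfolding sums branching_sum_eq_iff[OF pos] branching_sum_squares_eq_iff[OF pos] distinct
    by blast
qed

end
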